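(* Let $H$ be a Hamiltonian on $\mathbb{H}_\mathcal{S}$, $|\Psi\rangle\in\mathbb{H}_\mathcal{S}$ a unit vector, $\beta\ge0$, $\varepsilon\ge0$, and $S_r=\{\Delta\beta_l>0\}_{l\in[r]}$ with $\sum_{l=1}^r\Delta\beta_l=\beta$. Set $\beta_0:=0$, $\beta_l:=\sum_{k=1}^l\Delta\beta_k$, and $p_\Psi(b):=\|F_b(H)|\Psi\rangle\|^2$. For each $l\in[r]$ let $P_l$ be a $(\Delta\beta_l,\varepsilon'_l,\alpha_l)$-QITE-primitive for $H$ with $\alpha_l>0$ and $$\varepsilon'_l\le\begin{cases}\dfrac{\varepsilon\prod_{k=1}^r\alpha_k}{2\cdot4^{r-1}}\sqrt{p_\Psi(\beta)}, & l=1,\\[2mm] \dfrac{\varepsilon\prod_{k=l}^r\alpha_k}{4^{r-l+1}}\sqrt{\dfrac{p_\Psi(\beta)}{p_\Psi(\beta_{l-1})}}, & l>1.\end{cases}$$ Then the fragmented QITE algorithm is a $(\beta,\mathcal{O}(\varepsilon))$-master-QITE-algorithm for $H$ on $|\Psi\rangle$, with average query complexity $$Q_{S_r}(\beta,\varepsilon)=\sum_{l=1}^r n_l\,q(\Delta\beta_l,\varepsilon'_l,\alpha_l),\qquad n_l:=\frac{p_\Psi(\beta_{l-1})}{p_\Psi(\beta)\prod_{k=l}^r\alpha_k^2},$$ where $n_l$ is the average number of times $P_l$ is run and $q(\Delta\beta_l,\varepsilon'_l,\alpha_l)$ is the query complexity of $P_l$.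
   Context: $F_b(H):=e^{-b(H-\lambda_{\min}\mathbb{1})}$ with $\lambda_{\min}$ the smallest eigenvalue of $H$ ($\|H\|\le1$). A unitary $U$ on $\mathbb{H}_\mathcal{S}\otimes\mathbb{H}_\mathcal{A}$ is an $(\varepsilon,\alpha)$-block-encoding of $A$ if $\|\alpha A-\langle0|U|0\rangle\|\le\varepsilon$; a $(b,\varepsilon',\alpha)$-QITE-primitive of query complexity $q$ is a circuit making $q$ oracle calls that generates an $(\varepsilon',\alpha)$-block-encoding of $F_b(H)$; applying it to $|\phi\rangle|0\rangle$ and measuring the ancillas in the computational basis, outcome $|0\rangle$ ("success") leaves the system in $\langle0|U|0\rangle|\phi\rangle$ normalized. A $(\beta,\varepsilon)$-master-QITE-algorithm for $H$ on $|\Psi\rangle$ is a procedure using such primitives that outputs $F_\beta(H)|\Psi\rangle/\|F_\beta(H)|\Psi\rangle\|$ up to trace-distance error $\varepsilon$ with unit probability; its query complexity is the sum of the query complexities of all primitives applied. The fragmented QITE algorithm: set $l=1$, prepare the system in $|\Psi\rangle$ and ancillas in $|0\rangle$; while $l\le r$: apply $P_l$, measure the ancillas in the computational basis; if the outcome is $|0\rangle$ set $l\to l+1$, otherwise restart from scratch (fresh preparation of $|\Psi\rangle$, $l=1$). *)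

theory Defs
  imports Complex_Main "Jordan_Normal_Form.Char_Poly"
begin

definition cvnorm :: "complex vec \<Rightarrow> real" where
  "cvnorm v = sqrt (\<Sum>i<dim_vec v. (cmod (v $ i))\<^sup>2)"

definition cinner :: "complex vec \<Rightarrow> complex vec \<Rightarrow> complex" where
  "cinner v w = (\<Sum>i<dim_vec v. cnj (v $ i) * w $ i)"

definition adj :: "complex mat \<Rightarrow> complex mat" where
  "adj A = mat (dim_col A) (dim_row A) (\<lambda>(i,j). cnj (A $$ (j,i)))"

definition unitary_mat :: "nat \<Rightarrow> complex mat \<Rightarrow> bool" where
  "unitary_mat d U \<longleftrightarrow> U \<in> carrier_mat d d \<and> adj U * U = 1\<^sub>m d"

definition hermitian_mat :: "nat \<Rightarrow> complex mat \<Rightarrow> bool" where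
  "hermitian_mat d H \<longleftrightarrow> H \<in> carrier_mat d d \<and> adj H = H"

definition op_norm :: "complex mat \<Rightarrow> real" where
  "op_norm A = Sup {cvnorm (A *\<^sub>v v) | v. v \<in> carrier_vec (dim_col A) \<and> cvnorm v = 1}"

definition mat_exp :: "complex mat \<Rightarrow> complex mat" where
  "mat_exp A = mat (dim_row A) (dim_col A)
     (\<lambda>(i,j). \<Sum>k. (A ^\<^sub>m k) $$ (i,j) / of_nat (fact k))"

text \<open>Smallest eigenvalue of a Hermitian matrix (its eigenvalues are real).\<close>
definition lam_min :: "complex mat \<Rightarrow> real" where
  "lam_min H = Min {Re k | k. eigenvalue H k}"

definition F_op :: "real \<Rightarrow> complex mat \<Rightarrow> complex mat" where
  "F_op b H = mat_exp ((- complex_of_real b) \<cdot>\<^sub>m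
                 (H - complex_of_real (lam_min H) \<cdot>\<^sub>m 1\<^sub>m (dim_row H)))"

definition p_psi :: "complex mat \<Rightarrow> complex vec \<Rightarrow> real \<Rightarrow> real" where
  "p_psi H \<Psi> b = (cvnorm (F_op b H *\<^sub>v \<Psi>))\<^sup>2"

definition normalize_vec :: "complex vec \<Rightarrow> complex vec" where
  "normalize_vec v = complex_of_real (1 / cvnorm v) \<cdot>\<^sub>v v"

text \<open>Trace distance between the pure states \<open>|\<phi>\<rangle>\<langle>\<phi>|\<close> and \<open>|\<psi>\<rangle>\<langle>\<psi>|\<close>
  of unit vectors (closed form of half the trace norm of their difference).\<close>
definition trace_dist_pure :: "complex vec \<Rightarrow> complex vec \<Rightarrow> real" where
  "trace_dist_pure \<phi> \<psi> = sqrt (1 - (cmod (cinner \<phi> \<psi>))\<^sup>2)"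

text \<open>System \<open>\<otimes>\<close> ancilla with system dimension \<open>d\<close> and ancilla dimension \<open>m\<close>;
  basis index of \<open>|i\<rangle>|a\<rangle>\<close> is \<open>i * m + a\<close>; ancilla state \<open>|0\<rangle>\<close> is basis vector \<open>a = 0\<close>.
  \<open>anc0_block d m U\<close> is \<open>\<langle>0|U|0\<rangle>\<close>, an operator on the system.\<close>
definition anc0_block :: "nat \<Rightarrow> nat \<Rightarrow> complex mat \<Rightarrow> complex mat" where
  "anc0_block d m U = mat d d (\<lambda>(i,j). U $$ (i * m, j * m))"

definition block_encoding ::
  "nat \<Rightarrow> nat \<Rightarrow> real \<Rightarrow> real \<Rightarrow> complex mat \<Rightarrow> complex mat \<Rightarrow> bool" where
  "block_encoding d m eps alpha A U \<longleftrightarrow>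
     0 < m \<and> unitary_mat (d * m) U \<and>
     op_norm (complex_of_real alpha \<cdot>\<^sub>m A - anc0_block d m U) \<le> eps"

text \<open>A \<open>(b,\<epsilon>',\<alpha>)\<close>-QITE primitive for \<open>H\<close> is represented by the unitary \<open>U\<close>
  (on system \<open>\<otimes>\<close> \<open>m\<close>-dimensional ancilla) that its circuit implements; its query
  complexity is carried along as a separate natural number.\<close>
definition qite_primitive ::
  "nat \<Rightarrow> complex mat \<Rightarrow> real \<Rightarrow> real \<Rightarrow> real \<Rightarrow> nat \<Rightarrow> complex mat \<Rightarrow> bool" where
  "qite_primitive d H b eps' alpha m U \<longleftrightarrow> block_encoding d m eps' alpha (F_op b H) U"

text \<open>Within a single attempt: post-measurement (normalized) system state after
  primitives \<open>P_1,\<dots>,P_l\<close> all succeeded.  \<open>M l\<close> is \<open>\<langle>0|U_l|0\<rangle>\<close>.\<close>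
fun frag_state :: "(nat \<Rightarrow> complex mat) \<Rightarrow> complex vec \<Rightarrow> nat \<Rightarrow> complex vec" where
  "frag_state M \<Psi> 0 = \<Psi>"
| "frag_state M \<Psi> (Suc l) = normalize_vec (M (Suc l) *\<^sub>v frag_state M \<Psi> l)"

text \<open>Born-rule probability that \<open>P_l\<close> succeeds given that \<open>P_1..P_{l-1}\<close> succeeded.\<close>
definition frag_succ_prob :: "(nat \<Rightarrow> complex mat) \<Rightarrow> complex vec \<Rightarrow> nat \<Rightarrow> real" where
  "frag_succ_prob M \<Psi> l = (cvnorm (M l *\<^sub>v frag_state M \<Psi> (l - 1)))\<^sup>2"

text \<open>Probability that, within one attempt, \<open>P_l\<close> gets applied.\<close>
definition frag_reach_prob :: "(nat \<Rightarrow> complex mat) \<Rightarrow> complex vec \<Rightarrow> nat \<Rightarrow> real" where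
  "frag_reach_prob M \<Psi> l = (\<Prod>k\<in>{1..<l}. frag_succ_prob M \<Psi> k)"

definition frag_attempt_succ :: "(nat \<Rightarrow> complex mat) \<Rightarrow> complex vec \<Rightarrow> nat \<Rightarrow> real" where
  "frag_attempt_succ M \<Psi> r = (\<Prod>k\<in>{1..r}. frag_succ_prob M \<Psi> k)"

text \<open>Restart loop: attempt \<open>t\<close> (counting from 0) happens iff attempts \<open>0..t-1\<close> all
  failed.  Probability that the algorithm halts (some attempt succeeds):\<close>
definition frag_halt_prob :: "(nat \<Rightarrow> complex mat) \<Rightarrow> complex vec \<Rightarrow> nat \<Rightarrow> real" where
  "frag_halt_prob M \<Psi> r =
     (\<Sum>t. (1 - frag_attempt_succ M \<Psi> r) ^ t * frag_attempt_succ M \<Psi> r)"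

definition frag_expected_runs :: "(nat \<Rightarrow> complex mat) \<Rightarrow> complex vec \<Rightarrow> nat \<Rightarrow> nat \<Rightarrow> real" where
  "frag_expected_runs M \<Psi> r l =
     (\<Sum>t. (1 - frag_attempt_succ M \<Psi> r) ^ t * frag_reach_prob M \<Psi> l)"

end

theory Submission
  imports Defs "Jordan_Normal_Form.Spectral_Radius" "Jordan_Normal_Form.Schur_Decomposition"
    "HOL-Analysis.L2_Norm"
begin

text \<open>
  A unitary diagonalization of \<open>H\<close> shows that \<open>F_b(H)\<close>, \<open>b \<ge> 0\<close>, is a contraction semigroup
  fixing a \<open>\<lambda>_min\<close>-eigenvector; comparing \<open>\<alpha>_l\<close> times that eigenvector with its image under
  the contraction \<open>\<langle>0|U_l|0\<rangle>\<close> gives \<open>\<alpha>_l \<le> 1 + \<epsilon>'_l\<close>.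

  Let \<open>v_l\<close> be the unnormalized system state after \<open>P_1, \<dots>, P_l\<close> succeeded and
  \<open>w_l = \<alpha>_1 \<cdots> \<alpha>_l F_{\<beta>_l}(H)|\<Psi>\<rangle>\<close> its ideal value. As \<open>\<langle>0|U_l|0\<rangle>\<close> is a contraction,
  \<open>\<parallel>v_l - w_l\<parallel> \<le> \<parallel>v_{l-1} - w_{l-1}\<parallel> + \<epsilon>'_l \<parallel>w_{l-1}\<parallel>\<close>, and the precision hypotheses bound
  the \<open>l\<close>-th increment by \<open>2 \<epsilon> \<alpha>_1 \<cdots> \<alpha>_r \<surd>p_\<Psi>(\<beta>) 4^(l-1-r)\<close>. They also force
  \<open>\<alpha>_l \<le> 2\<close>, which turns the summed bound into \<open>\<parallel>v_l - w_l\<parallel> \<le> 2/3 \<epsilon> \<parallel>w_l\<parallel>\<close>.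

  By the Born rule an attempt reaches \<open>P_l\<close> with probability \<open>\<parallel>v_{l-1}\<parallel>\<^sup>2\<close> and succeeds with
  probability \<open>\<parallel>v_r\<parallel>\<^sup>2 > 0\<close>, so the restart loop halts almost surely and runs \<open>P_l\<close>
  \<open>\<parallel>v_{l-1}\<parallel>\<^sup>2 / \<parallel>v_r\<parallel>\<^sup>2\<close> times on average, whereas \<open>n_l = \<parallel>w_{l-1}\<parallel>\<^sup>2 / \<parallel>w_r\<parallel>\<^sup>2\<close>.
  The relative error bound then yields all claims with \<open>C = 10\<close> for \<open>\<epsilon> \<le> 1/100\<close>.
\<close>

lemma cvnorm_L2: "cvnorm v = L2_set (\<lambda>i. cmod (v $ i)) {..<dim_vec v}"
  unfolding cvnorm_def L2_set_def by simp

lemma cvnorm_nonneg [simp]: "0 \<le> cvnorm v"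
  unfolding cvnorm_def by (intro real_sqrt_ge_zero sum_nonneg) simp

lemma cvnorm_power2: "(cvnorm v)\<^sup>2 = (\<Sum>i<dim_vec v. (cmod (v $ i))\<^sup>2)"
  unfolding cvnorm_def by (simp add: sum_nonneg)

lemma cvnorm_eq_0_iff: "cvnorm v = 0 \<longleftrightarrow> v = 0\<^sub>v (dim_vec v)"
proof -
  have "cvnorm v = 0 \<longleftrightarrow> (\<forall>i\<in>{..<dim_vec v}. cmod (v $ i) = 0)"
    unfolding cvnorm_L2 by (rule L2_set_eq_0_iff) simp
  also have "\<dots> \<longleftrightarrow> v = 0\<^sub>v (dim_vec v)"
    by (auto simp: vec_eq_iff)
  finally show ?thesis .
qed

lemma cvnorm_zero_vec [simp]: "cvnorm (0\<^sub>v n) = 0"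
  using cvnorm_eq_0_iff[of "0\<^sub>v n"] by simp

lemma cvnorm_smult: "cvnorm (c \<cdot>\<^sub>v v) = cmod c * cvnorm v"
proof -
  have "cvnorm (c \<cdot>\<^sub>v v) = L2_set (\<lambda>i. cmod c * cmod (v $ i)) {..<dim_vec v}"
    unfolding cvnorm_L2 by (intro L2_set_cong) (auto simp: norm_mult)
  also have "\<dots> = cmod c * cvnorm v"
    unfolding cvnorm_L2 by (simp add: L2_set_right_distrib)
  finally show ?thesis .
qed

lemma cvnorm_triangle:
  assumes "dim_vec v = dim_vec w"
  shows "cvnorm (v + w) \<le> cvnorm v + cvnorm w"
proof -
  have "cvnorm (v + w) = L2_set (\<lambda>i. cmod (v $ i + w $ i)) {..<dim_vec w}"
    unfolding cvnorm_L2 using assms by (intro L2_set_cong) auto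
  also have "\<dots> \<le> L2_set (\<lambda>i. cmod (v $ i) + cmod (w $ i)) {..<dim_vec w}"
    by (intro L2_set_mono) (auto simp: norm_triangle_ineq)
  also have "\<dots> \<le> cvnorm v + cvnorm w"
    unfolding cvnorm_L2 using assms by (simp add: L2_set_triangle_ineq)
  finally show ?thesis .
qed

lemma cvnorm_minus_commute:
  "dim_vec v = dim_vec w \<Longrightarrow> cvnorm (v - w) = cvnorm (w - v)"
  unfolding cvnorm_def by (simp add: norm_minus_commute)

lemma cvnorm_le_add_diff:
  assumes "dim_vec v = dim_vec w"
  shows "cvnorm v \<le> cvnorm w + cvnorm (v - w)"
proof -
  have "v = w + (v - w)" using assms by (intro eq_vecI) auto
  then show ?thesis using cvnorm_triangle[of w "v - w"] assms by simp
qed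

lemma cvnorm_diff_abs_le:
  assumes "dim_vec v = dim_vec w"
  shows "\<bar>cvnorm v - cvnorm w\<bar> \<le> cvnorm (v - w)"
  using cvnorm_le_add_diff[OF assms] cvnorm_le_add_diff[of w v] cvnorm_minus_commute[OF assms] assms
  by linarith

lemma cmod_le_cvnorm: "j < dim_vec v \<Longrightarrow> cmod (v $ j) \<le> cvnorm v"
  unfolding cvnorm_L2 by (rule member_le_L2_set) auto

lemma cvnorm_le_sum_cmod: "cvnorm v \<le> (\<Sum>i<dim_vec v. cmod (v $ i))"
  unfolding cvnorm_L2 by (rule L2_set_le_sum) auto

lemma cinner_self: "cinner v v = complex_of_real ((cvnorm v)\<^sup>2)"
  unfolding cinner_def cvnorm_power2 of_real_sum
  by (intro sum.cong refl)
    (simp only: of_real_power[symmetric] complex_norm_square, simp add: mult.commute)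

lemma cinner_eq_cscalar_prod: "dim_vec v = dim_vec w \<Longrightarrow> cinner w v = v \<bullet>c w"
  unfolding cinner_def scalar_prod_def
  by (auto simp: atLeast0LessThan mult.commute intro!: sum.cong)

lemma cvnorm_diff_power2:
  assumes "dim_vec v = dim_vec w"
  shows "(cvnorm (v - w))\<^sup>2 = (cvnorm v)\<^sup>2 + (cvnorm w)\<^sup>2 - 2 * Re (cinner v w)"
proof -
  have "(cmod (x - y))\<^sup>2 = (cmod x)\<^sup>2 + (cmod y)\<^sup>2 - 2 * Re (cnj x * y)" for x y :: complex
    by (simp add: cmod_power2 power2_diff algebra_simps)
  then show ?thesis
    unfolding cvnorm_power2 cinner_def using assms
    by (simp add: sum_subtractf sum.distrib sum_distrib_left Re_sum)
qed

lemma mult_mat_vec_smult: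
  fixes A :: "'a::comm_semiring_0 mat"
  shows "A *\<^sub>v (c \<cdot>\<^sub>v v) = c \<cdot>\<^sub>v (A *\<^sub>v v)"
  by (intro eq_vecI) (auto simp: scalar_prod_def sum_distrib_left mult.left_commute intro!: sum.cong)

lemma smult_mat_mult_vec:
  "v \<in> carrier_vec (dim_col A) \<Longrightarrow> (c \<cdot>\<^sub>m A) *\<^sub>v v = c \<cdot>\<^sub>v (A *\<^sub>v v)"
  by (intro eq_vecI) (auto simp: scalar_prod_def sum_distrib_left mult.assoc)

lemma mult_mat_zero_vec: "A *\<^sub>v 0\<^sub>v k = 0\<^sub>v (dim_row A)"
  by (intro eq_vecI) (auto simp: scalar_prod_def)

lemma adj_carrier [simp]: "A \<in> carrier_mat n k \<Longrightarrow> adj A \<in> carrier_mat k n"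
  unfolding adj_def by auto

lemma adj_dim [simp]: "dim_row (adj A) = dim_col A" "dim_col (adj A) = dim_row A"
  unfolding adj_def by auto

lemma adj_index [simp]:
  "i < dim_col A \<Longrightarrow> j < dim_row A \<Longrightarrow> adj A $$ (i, j) = cnj (A $$ (j, i))"
  unfolding adj_def by auto

lemma adj_adj [simp]: "adj (adj A) = A"
  by (intro eq_matI) auto

lemma adj_mult:
  "A \<in> carrier_mat n k \<Longrightarrow> B \<in> carrier_mat k l \<Longrightarrow> adj (A * B) = adj B * adj A"
  by (intro eq_matI)
    (auto simp: scalar_prod_def sum_conjugate[symmetric] mult.commute intro!: sum.cong)

lemma adj_mult_index:
  assumes "A \<in> carrier_mat n k" "B \<in> carrier_mat n l" "i < k" "j < l"
  shows "(adj A * B) $$ (i, j) = (\<Sum>p<n. cnj (A $$ (p, i)) * B $$ (p, j))"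
  using assms by (auto simp: scalar_prod_def atLeast0LessThan intro!: sum.cong)

lemma cinner_mult_mat_vec:
  assumes A: "A \<in> carrier_mat n k" and v: "v \<in> carrier_vec k" and w: "w \<in> carrier_vec n"
  shows "cinner (A *\<^sub>v v) w = cinner v (adj A *\<^sub>v w)"
proof -
  have "cinner (A *\<^sub>v v) w = (\<Sum>i<n. \<Sum>j<k. cnj (v $ j) * (cnj (A $$ (i, j)) * w $ i))"
    unfolding cinner_def using A v
    by (auto simp: scalar_prod_def atLeast0LessThan sum_distrib_left sum_distrib_right mult_ac
        intro!: sum.cong)
  also have "\<dots> = (\<Sum>j<k. cnj (v $ j) * (\<Sum>i<n. cnj (A $$ (i, j)) * w $ i))"
    by (subst sum.swap) (simp add: sum_distrib_left)
  also have "\<dots> = cinner v (adj A *\<^sub>v w)"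
    unfolding cinner_def using A v w
    by (auto simp: scalar_prod_def atLeast0LessThan intro!: sum.cong)
  finally show ?thesis .
qed

lemma unitary_carrier: "unitary_mat n U \<Longrightarrow> U \<in> carrier_mat n n"
  unfolding unitary_mat_def by auto

lemma unitary_adj_mult: "unitary_mat n U \<Longrightarrow> adj U * U = 1\<^sub>m n"
  unfolding unitary_mat_def by auto

lemma unitary_mult_adj: "unitary_mat n U \<Longrightarrow> U * adj U = 1\<^sub>m n"
  unfolding unitary_mat_def by (intro mat_mult_left_right_inverse[of "adj U" n U]) auto

lemma unitary_adj: "unitary_mat n U \<Longrightarrow> unitary_mat n (adj U)"
  using unitary_mult_adj unfolding unitary_mat_def by auto

lemma unitary_mult:
  assumes U: "unitary_mat n U" and V: "unitary_mat n V"
  shows "unitary_mat n (U * V)"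
proof -
  note carriers = unitary_carrier[OF U] unitary_carrier[OF V]
  have "adj (U * V) * (U * V) = adj V * ((adj U * U) * V)"
    using carriers by (simp add: adj_mult assoc_mult_mat[of _ n n _ n _ n])
  also have "\<dots> = 1\<^sub>m n"
    using carriers by (simp add: unitary_adj_mult[OF U] unitary_adj_mult[OF V])
  finally show ?thesis using carriers unfolding unitary_mat_def by auto
qed

lemma unitary_cvnorm:
  assumes U: "unitary_mat n U" and x: "x \<in> carrier_vec n"
  shows "cvnorm (U *\<^sub>v x) = cvnorm x"
proof -
  note Uc = unitary_carrier[OF U]
  have "complex_of_real ((cvnorm (U *\<^sub>v x))\<^sup>2) = cinner x (adj U *\<^sub>v (U *\<^sub>v x))"
    unfolding cinner_self[symmetric] using Uc x by (intro cinner_mult_mat_vec) auto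
  also have "adj U *\<^sub>v (U *\<^sub>v x) = x"
    using Uc x by (simp add: assoc_mult_mat_vec[symmetric, of _ n n _ n] unitary_adj_mult[OF U])
  finally have "(cvnorm (U *\<^sub>v x))\<^sup>2 = (cvnorm x)\<^sup>2"
    unfolding cinner_self of_real_eq_iff .
  then show ?thesis by (simp add: power2_eq_iff_nonneg)
qed

lemma unitary_col_cvnorm:
  assumes U: "unitary_mat n U" and p: "p < n"
  shows "cvnorm (col U p) = 1"
proof -
  note Uc = unitary_carrier[OF U]
  have "cinner (col U p) (col U p) = (adj U * U) $$ (p, p)"
    unfolding cinner_def adj_mult_index[OF Uc Uc p p] using Uc p by simp
  also have "\<dots> = 1" using p by (simp add: unitary_adj_mult[OF U])
  finally have "(cvnorm (col U p))\<^sup>2 = 1"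
    unfolding cinner_self by (simp only: of_real_eq_1_iff)
  then show ?thesis using cvnorm_nonneg[of "col U p"] by (simp add: power2_eq_1_iff)
qed

lemma hermitian_unitary_conj:
  assumes A: "hermitian_mat n A" and W: "unitary_mat n W"
  shows "hermitian_mat n (adj W * A * W)"
proof -
  have Ac: "A \<in> carrier_mat n n" and hA: "adj A = A"
    using A unfolding hermitian_mat_def by auto
  note Wc = unitary_carrier[OF W]
  have "adj (adj W * A * W) = adj W * adj A * adj (adj W)"
    using Ac Wc by (simp add: adj_mult[of _ n n _ n] assoc_mult_mat[of _ n n _ n _ n])
  then show ?thesis unfolding hermitian_mat_def hA using Ac Wc by auto
qed

section \<open>Unitary diagonalization of Hermitian matrices\<close>

lemma unitary_diag_index:
  assumes "U \<in> carrier_mat n n" "i < n" "j < n"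
  shows "(U * mat_diag n g * adj U) $$ (i, j) = (\<Sum>k<n. U $$ (i, k) * g k * cnj (U $$ (j, k)))"
  using assms by (auto simp: mat_diag_mult_right scalar_prod_def atLeast0LessThan intro!: sum.cong)

lemma unitary_adj_mult_cancel:
  assumes U: "unitary_mat n U" and X: "X \<in> carrier_mat n k"
  shows "adj U * (U * X) = X"
proof -
  have "adj U * (U * X) = (adj U * U) * X"
    using unitary_carrier[OF U] X by (intro assoc_mult_mat[symmetric]) auto
  then show ?thesis using X by (simp add: unitary_adj_mult[OF U])
qed

lemma unitary_diag_mult:
  assumes U: "unitary_mat n U"
  shows "(U * mat_diag n f * adj U) * (U * mat_diag n g * adj U) = U * mat_diag n (\<lambda>i. f i * g i) * adj U"
proof -
  note Uc = unitary_carrier[OF U]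
  have sq: "X * Y \<in> carrier_mat n n" if "X \<in> carrier_mat n n" "Y \<in> carrier_mat n n" for X Y :: "complex mat"
    using that by auto
  have "(U * mat_diag n f * adj U) * (U * mat_diag n g * adj U)
      = U * (mat_diag n f * (adj U * (U * (mat_diag n g * adj U))))"
    using Uc by (simp add: sq assoc_mult_mat[of _ n n _ n _ n])
  also have "adj U * (U * (mat_diag n g * adj U)) = mat_diag n g * adj U"
    using Uc by (intro unitary_adj_mult_cancel[OF U, of _ n] mult_carrier_mat[OF mat_diag_dim]) auto
  also have "U * (mat_diag n f * (mat_diag n g * adj U)) = U * mat_diag n (\<lambda>i. f i * g i) * adj U"
    using Uc by (simp add: sq assoc_mult_mat[of _ n n _ n _ n, symmetric])
  finally show ?thesis .
qed

lemma unitary_diag_power: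
  assumes U: "unitary_mat n U"
  shows "(U * mat_diag n g * adj U) ^\<^sub>m k = U * mat_diag n (\<lambda>i. g i ^ k) * adj U"
proof (induction k)
  case 0
  show ?case using unitary_carrier[OF U] by (simp add: unitary_mult_adj[OF U])
next
  case (Suc k)
  then show ?case by (simp add: unitary_diag_mult[OF U] mult.commute)
qed

lemma unitary_diag_mult_unitary:
  assumes U: "unitary_mat n U"
  shows "(U * mat_diag n g * adj U) * U = U * mat_diag n g"
proof -
  note Uc = unitary_carrier[OF U]
  have "(U * mat_diag n g * adj U) * U = (U * mat_diag n g) * (adj U * U)"
    using Uc by (intro assoc_mult_mat[of _ n n _ n _ n]) auto
  also have "\<dots> = U * mat_diag n g"
    using Uc by (simp add: unitary_adj_mult[OF U] right_mult_one_mat[OF mult_carrier_mat[OF Uc mat_diag_dim]])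
  finally show ?thesis .
qed

lemma col_mult_mat_diag:
  fixes U :: "complex mat"
  shows "U \<in> carrier_mat n n \<Longrightarrow> p < n \<Longrightarrow> col (U * mat_diag n g) p = g p \<cdot>\<^sub>v col U p"
  by (intro eq_vecI) (auto simp: mat_diag_mult_right mult.commute)

lemma unit_eigenvector_exists:
  assumes A: "A \<in> carrier_mat n n" and n: "0 < n"
  obtains e v where "v \<in> carrier_vec n" "cvnorm v = 1" "A *\<^sub>v v = e \<cdot>\<^sub>v v"
proof -
  obtain e where "e \<in> spectrum A" using spectrum_non_empty[OF A n] by auto
  then obtain u where u: "u \<in> carrier_vec n" "u \<noteq> 0\<^sub>v n" and Au: "A *\<^sub>v u = e \<cdot>\<^sub>v u"
    using A by (auto simp: spectrum_def eigenvalue_def eigenvector_def)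
  have "cvnorm u \<noteq> 0" using u cvnorm_eq_0_iff[of u] by auto
  then have pos: "0 < cvnorm u" using cvnorm_nonneg[of u] by linarith
  define v where "v = complex_of_real (1 / cvnorm u) \<cdot>\<^sub>v u"
  show ?thesis
  proof (rule that)
    show "v \<in> carrier_vec n" unfolding v_def using u by simp
    show "cvnorm v = 1" unfolding v_def cvnorm_smult using pos by (simp add: norm_divide)
    show "A *\<^sub>v v = e \<cdot>\<^sub>v v"
      unfolding v_def mult_mat_vec_smult Au by (auto simp: smult_smult_assoc mult.commute)
  qed
qed

lemma unitary_of_corthogonal:
  assumes ws: "set ws \<subseteq> carrier_vec n" "length ws = n" and orth: "corthogonal ws"
  shows "unitary_mat n (mat n n (\<lambda>(k, j). ws ! j $ k / complex_of_real (cvnorm (ws ! j))))"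
    (is "unitary_mat n ?W")
proof -
  have wsi: "ws ! i \<in> carrier_vec n" if "i < n" for i using ws that by auto
  have ip: "cinner (ws ! i) (ws ! j) = 0 \<longleftrightarrow> i \<noteq> j" if "i < n" "j < n" for i j
    using corthogonalD[OF orth, of j i] that ws wsi[OF that(1)] wsi[OF that(2)]
    by (auto simp: cinner_eq_cscalar_prod)
  have pos: "0 < cvnorm (ws ! i)" if "i < n" for i
  proof -
    have "cvnorm (ws ! i) \<noteq> 0" using ip[OF that that] by (auto simp: cinner_self)
    then show ?thesis using cvnorm_nonneg[of "ws ! i"] by linarith
  qed
  have "(adj ?W * ?W) $$ (i, j) = 1\<^sub>m n $$ (i, j)" if i: "i < n" and j: "j < n" for i j
  proof -
    have "(adj ?W * ?W) $$ (i, j) = (\<Sum>p<n. cnj (?W $$ (p, i)) * ?W $$ (p, j))"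
      by (rule adj_mult_index) (use i j in auto)
    also have "\<dots> = cinner (ws ! i) (ws ! j) / complex_of_real (cvnorm (ws ! i) * cvnorm (ws ! j))"
      unfolding cinner_def using i j wsi[OF i] by (simp add: sum_divide_distrib)
    also have "\<dots> = 1\<^sub>m n $$ (i, j)" using ip[OF i j] pos[OF i] i j
      by (cases "i = j") (simp_all add: cinner_self power2_eq_square)
    finally show ?thesis .
  qed
  then show ?thesis unfolding unitary_mat_def by (auto intro!: eq_matI)
qed

lemma unitary_extension_of_unit_vector:
  assumes v: "v \<in> carrier_vec n" and v1: "cvnorm v = 1"
  obtains W where "unitary_mat n W" "col W 0 = v"
proof -
  have v0: "v \<noteq> 0\<^sub>v n" using v1 by auto
  then have n: "0 < n" using v by (cases n) auto
  interpret cof_vec_space n "TYPE(complex)" .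
  define b where "b = basis_completion v"
  from basis_completion[OF v v0, folded b_def]
  have b: "distinct b" "\<not> lin_dep (set b)" "set b \<subseteq> carrier_vec n" "length b = n" "hd b = v"
    by auto
  then obtain vs where bv: "b = v # vs" using n by (cases b) auto
  define ws where "ws = gram_schmidt n b"
  from gram_schmidt_result[OF b(3,1,2) ws_def]
  have ws: "set ws \<subseteq> carrier_vec n" "length ws = n" "corthogonal ws" using b(4) by auto
  have "ws ! 0 = hd ws" using ws(2) n by (intro hd_conv_nth[symmetric]) auto
  also have "\<dots> = v" using gram_schmidt_hd[OF v, of vs] bv ws_def by simp
  finally have "ws ! 0 = v" .
  then have "col (mat n n (\<lambda>(k, j). ws ! j $ k / complex_of_real (cvnorm (ws ! j)))) 0 = v"
    using v v1 n by (intro eq_vecI) auto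
  with unitary_of_corthogonal[OF ws] show ?thesis using that by blast
qed

lemma unitary_conj_eigen_col:
  assumes A: "A \<in> carrier_mat n n" and W: "unitary_mat n W" and n: "0 < n"
    and eig: "A *\<^sub>v col W 0 = e \<cdot>\<^sub>v col W 0" and i: "i < n"
  shows "(adj W * A * W) $$ (i, 0) = (if i = 0 then e else 0)"
proof -
  note Wc = unitary_carrier[OF W]
  have "(adj W * A * W) $$ (i, 0) = (adj W *\<^sub>v (A *\<^sub>v col W 0)) $ i"
    using A Wc n i by (simp add: assoc_mult_mat[of _ n n _ n _ n] col_mult2 mult_mat_vec_def)
  also have "\<dots> = e * (adj W * W) $$ (i, 0)"
    unfolding eig using Wc n i by (simp add: mult_mat_vec_smult col_mult2[symmetric])
  finally show ?thesis using i n by (simp add: unitary_adj_mult[OF W])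
qed

definition lift_mat :: "nat \<Rightarrow> complex mat \<Rightarrow> complex mat" where
  "lift_mat n V = mat (Suc n) (Suc n)
     (\<lambda>(i, j). if i = 0 \<or> j = 0 then of_bool (i = j) else V $$ (i - 1, j - 1))"

lemma lift_mat_carrier [simp]: "lift_mat n V \<in> carrier_mat (Suc n) (Suc n)"
  and lift_mat_dim [simp]: "dim_row (lift_mat n V) = Suc n" "dim_col (lift_mat n V) = Suc n"
  unfolding lift_mat_def by simp_all

lemma unitary_lift_mat:
  assumes V: "unitary_mat n V"
  shows "unitary_mat (Suc n) (lift_mat n V)"
proof -
  let ?L = "lift_mat n V"
  have "(adj ?L * ?L) $$ (i, j) = 1\<^sub>m (Suc n) $$ (i, j)" if i: "i < Suc n" and j: "j < Suc n" for i j
  proof -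
    have "(adj ?L * ?L) $$ (i, j)
        = cnj (?L $$ (0, i)) * ?L $$ (0, j) + (\<Sum>k<n. cnj (?L $$ (Suc k, i)) * ?L $$ (Suc k, j))"
      unfolding adj_mult_index[OF lift_mat_carrier lift_mat_carrier i j] sum.lessThan_Suc_shift ..
    also have "\<dots> = 1\<^sub>m (Suc n) $$ (i, j)"
    proof (cases i; cases j)
      fix i' j' assume ij: "i = Suc i'" "j = Suc j'"
      have "(\<Sum>k<n. cnj (?L $$ (Suc k, i)) * ?L $$ (Suc k, j)) = (adj V * V) $$ (i', j')"
        using i j ij unitary_carrier[OF V] by (subst adj_mult_index[of _ n n]) (simp_all add: lift_mat_def)
      then show ?thesis using i j ij by (simp add: unitary_adj_mult[OF V] lift_mat_def)
    qed (use i j in \<open>auto simp: lift_mat_def\<close>)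
    finally show ?thesis .
  qed
  then show ?thesis unfolding unitary_mat_def by (auto intro!: eq_matI)
qed

lemma lift_mat_diag:
  assumes V: "V \<in> carrier_mat n n" and B: "B \<in> carrier_mat (Suc n) (Suc n)"
    and col0: "\<And>i. i < Suc n \<Longrightarrow> B $$ (i, 0) = (if i = 0 then e else 0)"
    and row0: "\<And>j. j < Suc n \<Longrightarrow> B $$ (0, j) = (if j = 0 then e else 0)"
    and block: "\<And>i j. i < n \<Longrightarrow> j < n \<Longrightarrow> B $$ (Suc i, Suc j) = (V * mat_diag n g * adj V) $$ (i, j)"
  shows "B = lift_mat n V * mat_diag (Suc n) (\<lambda>k. if k = 0 then e else g (k - 1)) * adj (lift_mat n V)"
    (is "B = ?L * mat_diag (Suc n) ?g * adj ?L")
proof (rule eq_matI)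
  fix i j assume "i < dim_row (?L * mat_diag (Suc n) ?g * adj ?L)" "j < dim_col (?L * mat_diag (Suc n) ?g * adj ?L)"
  then have i: "i < Suc n" and j: "j < Suc n" by auto
  have "(?L * mat_diag (Suc n) ?g * adj ?L) $$ (i, j)
      = ?L $$ (i, 0) * e * cnj (?L $$ (j, 0)) + (\<Sum>k<n. ?L $$ (i, Suc k) * g k * cnj (?L $$ (j, Suc k)))"
    unfolding unitary_diag_index[OF lift_mat_carrier i j] sum.lessThan_Suc_shift by simp
  also have "\<dots> = B $$ (i, j)"
  proof (cases i; cases j)
    fix i' j' assume ij: "i = Suc i'" "j = Suc j'"
    then have "i' < n" "j' < n" using i j by auto
    then show ?thesis
      using ij by (simp add: lift_mat_def block unitary_diag_index[OF V])
  qed (use i j col0 row0 in \<open>auto simp: lift_mat_def\<close>)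
  finally show "B $$ (i, j) = (?L * mat_diag (Suc n) ?g * adj ?L) $$ (i, j)" ..
qed (use B in auto)

lemma hermitian_lower_block:
  assumes "hermitian_mat (Suc n) B"
  shows "hermitian_mat n (mat n n (\<lambda>(i, j). B $$ (Suc i, Suc j)))"
proof -
  have "B \<in> carrier_mat (Suc n) (Suc n)" "adj B = B" using assms unfolding hermitian_mat_def by auto
  then have "cnj (B $$ (Suc j, Suc i)) = B $$ (Suc i, Suc j)" if "i < n" "j < n" for i j
    using that by (metis Suc_mono adj_index carrier_matD)
  then show ?thesis unfolding hermitian_mat_def by (auto intro!: eq_matI)
qed

lemma unitary_conj_inverse:
  assumes W: "unitary_mat n W" and A: "A \<in> carrier_mat n n"
  shows "W * (adj W * A * W) * adj W = A"
proof -
  note Wc = unitary_carrier[OF W]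
  have sq: "X * Y \<in> carrier_mat n n" if "X \<in> carrier_mat n n" "Y \<in> carrier_mat n n" for X Y :: "complex mat"
    using that by auto
  have "W * (adj W * A * W) * adj W = (W * adj W) * A * (W * adj W)"
    using Wc A by (simp add: sq assoc_mult_mat[of _ n n _ n _ n])
  then show ?thesis using A by (simp add: unitary_mult_adj[OF W])
qed

lemma hermitian_deflation:
  assumes A: "hermitian_mat (Suc n) A"
  obtains W e where "unitary_mat (Suc n) W" "hermitian_mat (Suc n) (adj W * A * W)"
    "\<And>i. i < Suc n \<Longrightarrow> (adj W * A * W) $$ (i, 0) = (if i = 0 then complex_of_real e else 0)"
    "\<And>j. j < Suc n \<Longrightarrow> (adj W * A * W) $$ (0, j) = (if j = 0 then complex_of_real e else 0)"
proof -
  have Ac: "A \<in> carrier_mat (Suc n) (Suc n)" using A by (simp add: hermitian_mat_def)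
  obtain e v where v: "v \<in> carrier_vec (Suc n)" "cvnorm v = 1" and Av: "A *\<^sub>v v = e \<cdot>\<^sub>v v"
    using unit_eigenvector_exists[OF Ac] by blast
  obtain W where W: "unitary_mat (Suc n) W" and Wv: "col W 0 = v"
    using unitary_extension_of_unit_vector[OF v] by blast
  define B where "B = adj W * A * W"
  have hB: "hermitian_mat (Suc n) B" unfolding B_def by (rule hermitian_unitary_conj[OF A W])
  then have Bc: "B \<in> carrier_mat (Suc n) (Suc n)" and adjB: "adj B = B" by (auto simp: hermitian_mat_def)
  have col0: "B $$ (i, 0) = (if i = 0 then e else 0)" if "i < Suc n" for i
    unfolding B_def using unitary_conj_eigen_col[OF Ac W _ _ that] Av Wv by simp
  have row_col: "B $$ (0, j) = cnj (B $$ (j, 0))" if "j < Suc n" for j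
    using Bc that by (metis adjB adj_index carrier_matD zero_less_Suc)
  have e: "e = complex_of_real (Re e)"
    using row_col[of 0] col0[of 0] by (simp add: complex_eq_iff)
  have "B $$ (0, j) = (if j = 0 then e else 0)" if "j < Suc n" for j
    using row_col[OF that] col0[OF that] e by (metis complex_cnj_complex_of_real complex_cnj_zero)
  with that[OF W hB[unfolded B_def]] col0 e show ?thesis unfolding B_def by metis
qed

theorem hermitian_unitary_diagonalization:
  assumes "hermitian_mat n A"
  shows "\<exists>U \<mu>. unitary_mat n U \<and> A = U * mat_diag n (\<lambda>k. complex_of_real (\<mu> k)) * adj U"
  using assms
proof (induction n arbitrary: A)
  case 0
  then have "A \<in> carrier_mat 0 0" by (simp add: hermitian_mat_def)
  then show ?case by (intro exI[of _ "1\<^sub>m 0"]) (auto simp: unitary_mat_def intro!: eq_matI)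
next
  case (Suc n)
  obtain W e where W: "unitary_mat (Suc n) W" and hB: "hermitian_mat (Suc n) (adj W * A * W)"
    and col0: "\<And>i. i < Suc n \<Longrightarrow> (adj W * A * W) $$ (i, 0) = (if i = 0 then complex_of_real e else 0)"
    and row0: "\<And>j. j < Suc n \<Longrightarrow> (adj W * A * W) $$ (0, j) = (if j = 0 then complex_of_real e else 0)"
    using hermitian_deflation[OF Suc.prems] by blast
  let ?B = "adj W * A * W"
  obtain V \<mu>' where V: "unitary_mat n V"
    and block: "mat n n (\<lambda>(i, j). ?B $$ (Suc i, Suc j)) = V * mat_diag n (\<lambda>k. complex_of_real (\<mu>' k)) * adj V"
    using Suc.IH[OF hermitian_lower_block[OF hB]] by blast
  define \<mu> where "\<mu> k = (if k = 0 then e else \<mu>' (k - 1))" for k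
  have "(\<lambda>k. if k = 0 then complex_of_real e else complex_of_real (\<mu>' (k - 1))) = (\<lambda>k. complex_of_real (\<mu> k))"
    by (auto simp: \<mu>_def)
  with lift_mat_diag[OF unitary_carrier[OF V] _ col0 row0, of "\<lambda>k. complex_of_real (\<mu>' k)"] block hB
  have B: "?B = lift_mat n V * mat_diag (Suc n) (\<lambda>k. complex_of_real (\<mu> k)) * adj (lift_mat n V)"
    unfolding hermitian_mat_def by (metis (no_types, lifting) index_mat(1) prod.simps(2))
  have sq: "X * Y \<in> carrier_mat (Suc n) (Suc n)"
    if "X \<in> carrier_mat (Suc n) (Suc n)" "Y \<in> carrier_mat (Suc n) (Suc n)" for X Y :: "complex mat"
    using that by auto
  have "A = W * ?B * adj W"
    using Suc.prems by (intro unitary_conj_inverse[OF W, symmetric]) (simp add: hermitian_mat_def)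
  also have "\<dots> = (W * lift_mat n V) * mat_diag (Suc n) (\<lambda>k. complex_of_real (\<mu> k)) * adj (W * lift_mat n V)"
    unfolding B using unitary_carrier[OF W]
    by (simp add: sq adj_mult[of _ "Suc n" "Suc n" _ "Suc n"] assoc_mult_mat[of _ "Suc n" "Suc n" _ "Suc n" _ "Suc n"])
  finally show ?case using unitary_mult[OF W unitary_lift_mat[OF V]] by blast
qed

section \<open>The imaginary-time evolution operator\<close>

lemma eigenvalue_unitary_diag_iff:
  assumes U: "unitary_mat d U"
  shows "eigenvalue (U * mat_diag d g * adj U) k \<longleftrightarrow> (\<exists>p<d. k = g p)"
proof -
  note Uc = unitary_carrier[OF U]
  have "similar_mat (U * mat_diag d g * adj U) (mat_diag d g)"
    using Uc unitary_mult_adj[OF U] unitary_adj_mult[OF U] by (intro similar_matI) auto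
  then have "char_poly (U * mat_diag d g * adj U) = (\<Prod>a\<leftarrow>diag_mat (mat_diag d g). [:- a, 1:])"
    by (simp add: char_poly_similar char_poly_upper_triangular[of _ d] upper_triangular_def mat_diag_def)
  moreover have "U * mat_diag d g * adj U \<in> carrier_mat d d" using Uc by auto
  ultimately have "eigenvalue (U * mat_diag d g * adj U) k \<longleftrightarrow> k \<in> set (diag_mat (mat_diag d g))"
    by (simp add: eigenvalue_root_char_poly poly_prod_list_zero_iff)
  then show ?thesis by (auto simp: diag_mat_def mat_diag_def)
qed

lemma lam_min_unitary_diag:
  assumes U: "unitary_mat d U" and d: "0 < d"
  shows "lam_min (U * mat_diag d (\<lambda>k. complex_of_real (\<mu> k)) * adj U) = Min (\<mu> ` {..<d})"
proof -
  have "{Re k |k. eigenvalue (U * mat_diag d (\<lambda>k. complex_of_real (\<mu> k)) * adj U) k} = \<mu> ` {..<d}"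
    unfolding eigenvalue_unitary_diag_iff[OF U] by force
  then show ?thesis unfolding lam_min_def by simp
qed

lemma mat_exp_unitary_diag:
  assumes U: "unitary_mat n U"
  shows "mat_exp (U * mat_diag n g * adj U) = U * mat_diag n (\<lambda>i. exp (g i)) * adj U"
proof (rule eq_matI)
  note Uc = unitary_carrier[OF U]
  fix i j assume "i < dim_row (U * mat_diag n (\<lambda>i. exp (g i)) * adj U)"
    "j < dim_col (U * mat_diag n (\<lambda>i. exp (g i)) * adj U)"
  then have i: "i < n" and j: "j < n" using Uc by auto
  have "(\<lambda>k. \<Sum>p<n. U $$ (i, p) * (g p ^ k / fact k) * cnj (U $$ (j, p))) sums
      (\<Sum>p<n. U $$ (i, p) * exp (g p) * cnj (U $$ (j, p)))"
  proof (rule sums_sum)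
    fix p
    have "(\<lambda>k. g p ^ k / fact k) sums exp (g p)"
      using exp_converges[of "g p"] by (simp add: scaleR_conv_of_real divide_inverse mult.commute)
    then show "(\<lambda>k. U $$ (i, p) * (g p ^ k / fact k) * cnj (U $$ (j, p))) sums
        (U $$ (i, p) * exp (g p) * cnj (U $$ (j, p)))"
      by (intro sums_mult sums_mult2)
  qed
  moreover have "((U * mat_diag n g * adj U) ^\<^sub>m k) $$ (i, j) / of_nat (fact k) =
      (\<Sum>p<n. U $$ (i, p) * (g p ^ k / fact k) * cnj (U $$ (j, p)))" for k
    unfolding unitary_diag_power[OF U] unitary_diag_index[OF Uc i j]
    by (simp add: sum_divide_distrib of_nat_fact)
  ultimately show "mat_exp (U * mat_diag n g * adj U) $$ (i, j) = (U * mat_diag n (\<lambda>i. exp (g i)) * adj U) $$ (i, j)"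
    unfolding mat_exp_def unitary_diag_index[OF Uc i j] using i j Uc by (auto dest: sums_unique)
qed (use unitary_carrier[OF assms] in \<open>auto simp: mat_exp_def\<close>)

lemma F_op_unitary_diag:
  assumes U: "unitary_mat d U" and H: "H = U * mat_diag d (\<lambda>k. complex_of_real (\<mu> k)) * adj U"
  shows "F_op b H = U * mat_diag d (\<lambda>p. complex_of_real (exp (- b * (\<mu> p - lam_min H)))) * adj U"
proof -
  note Uc = unitary_carrier[OF U]
  define l where "l = lam_min H"
  have exponent: "(- complex_of_real b) \<cdot>\<^sub>m (H - complex_of_real l \<cdot>\<^sub>m 1\<^sub>m (dim_row H))
      = U * mat_diag d (\<lambda>p. complex_of_real (- b * (\<mu> p - l))) * adj U"
  proof (rule eq_matI)
    fix i j assume "i < dim_row (U * mat_diag d (\<lambda>p. complex_of_real (- b * (\<mu> p - l))) * adj U)"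
      "j < dim_col (U * mat_diag d (\<lambda>p. complex_of_real (- b * (\<mu> p - l))) * adj U)"
    then have i: "i < d" and j: "j < d" using Uc by auto
    have "1\<^sub>m d $$ (i, j) = (U * mat_diag d (\<lambda>_. 1) * adj U) $$ (i, j)"
      using Uc by (simp add: unitary_mult_adj[OF U])
    then have one: "1\<^sub>m d $$ (i, j) = (\<Sum>p<d. U $$ (i, p) * cnj (U $$ (j, p)))"
      unfolding unitary_diag_index[OF Uc i j] by simp
    show "((- complex_of_real b) \<cdot>\<^sub>m (H - complex_of_real l \<cdot>\<^sub>m 1\<^sub>m (dim_row H))) $$ (i, j)
        = (U * mat_diag d (\<lambda>p. complex_of_real (- b * (\<mu> p - l))) * adj U) $$ (i, j)"
      using i j Uc unfolding unitary_diag_index[OF Uc i j]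
      by (simp add: H unitary_diag_index[OF Uc i j] one sum_distrib_left sum_subtractf[symmetric]
          algebra_simps)
  qed (use H Uc in auto)
  show ?thesis
    unfolding F_op_def l_def[symmetric] exponent mat_exp_unitary_diag[OF U] by (simp only: exp_of_real)
qed

lemma F_op_spectral:
  assumes "hermitian_mat d H" "0 < d"
  obtains U \<mu> p0 where "unitary_mat d U" "\<And>p. p < d \<Longrightarrow> lam_min H \<le> \<mu> p" "p0 < d" "\<mu> p0 = lam_min H"
    "\<And>b. F_op b H = U * mat_diag d (\<lambda>p. complex_of_real (exp (- b * (\<mu> p - lam_min H)))) * adj U"
proof -
  obtain U \<mu> where U: "unitary_mat d U" and H: "H = U * mat_diag d (\<lambda>k. complex_of_real (\<mu> k)) * adj U"
    using hermitian_unitary_diagonalization[OF assms(1)] by blast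
  have min: "lam_min H = Min (\<mu> ` {..<d})" unfolding H by (rule lam_min_unitary_diag[OF U assms(2)])
  then have "lam_min H \<in> \<mu> ` {..<d}" using assms(2) by (auto intro: Min_in)
  then obtain p0 where "p0 < d" "\<mu> p0 = lam_min H" by auto
  moreover have "lam_min H \<le> \<mu> p" if "p < d" for p unfolding min using that by simp
  ultimately show ?thesis using that[OF U] F_op_unitary_diag[OF U H] by blast
qed

lemma F_op_dim [simp]: "dim_row (F_op b H) = dim_row H" "dim_col (F_op b H) = dim_row H"
  unfolding F_op_def mat_exp_def by auto

lemma F_op_carrier [simp]: "hermitian_mat d H \<Longrightarrow> F_op b H \<in> carrier_mat d d"
  unfolding hermitian_mat_def by auto

lemma F_op_mult_vec_carrier [simp]: "hermitian_mat d H \<Longrightarrow> F_op b H *\<^sub>v x \<in> carrier_vec d"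
  unfolding hermitian_mat_def carrier_vec_def by auto

lemma F_op_zero:
  assumes "hermitian_mat d H" "0 < d"
  shows "F_op 0 H = 1\<^sub>m d"
proof -
  obtain U \<mu> where U: "unitary_mat d U"
    and F: "\<And>b. F_op b H = U * mat_diag d (\<lambda>p. complex_of_real (exp (- b * (\<mu> p - lam_min H)))) * adj U"
    using F_op_spectral[OF assms] by metis
  show ?thesis unfolding F using unitary_carrier[OF U] by (simp add: unitary_mult_adj[OF U])
qed

lemma F_op_add:
  assumes "hermitian_mat d H" "0 < d"
  shows "F_op a H * F_op b H = F_op (a + b) H"
proof -
  obtain U \<mu> where U: "unitary_mat d U"
    and F: "\<And>b. F_op b H = U * mat_diag d (\<lambda>p. complex_of_real (exp (- b * (\<mu> p - lam_min H)))) * adj U"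
    using F_op_spectral[OF assms] by metis
  have "complex_of_real (exp (- a * t)) * complex_of_real (exp (- b * t)) = complex_of_real (exp (- (a + b) * t))"
    for t by (simp flip: of_real_mult exp_add add: algebra_simps)
  then show ?thesis unfolding F unitary_diag_mult[OF U] by presburger
qed

lemma F_op_mult_vec_add:
  assumes H: "hermitian_mat d H" and d: "0 < d" and x: "x \<in> carrier_vec d"
  shows "F_op a H *\<^sub>v (F_op b H *\<^sub>v x) = F_op (a + b) H *\<^sub>v x"
proof -
  have "F_op a H *\<^sub>v (F_op b H *\<^sub>v x) = (F_op a H * F_op b H) *\<^sub>v x"
    by (rule assoc_mult_mat_vec[symmetric, OF F_op_carrier[OF H] F_op_carrier[OF H] x])
  then show ?thesis unfolding F_op_add[OF H d] .
qed

lemma mat_diag_contraction: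
  assumes z: "z \<in> carrier_vec n" and g: "\<And>i. i < n \<Longrightarrow> cmod (g i) \<le> 1"
  shows "cvnorm (mat_diag n g *\<^sub>v z) \<le> cvnorm z"
proof -
  have "(mat_diag n g *\<^sub>v z) $ i = g i * z $ i" if "i < n" for i
  proof -
    have "(mat_diag n g *\<^sub>v z) $ i = (\<Sum>k\<in>{0..<n}. (if i = k then g k else 0) * z $ k)"
      using z that by (simp add: mat_diag_def scalar_prod_def)
    also have "\<dots> = (\<Sum>k\<in>{0..<n}. if i = k then g k * z $ k else 0)"
      by (rule sum.cong) auto
    finally show ?thesis using that by simp
  qed
  then have "cvnorm (mat_diag n g *\<^sub>v z) = L2_set (\<lambda>i. cmod (g i) * cmod (z $ i)) {..<n}"
    unfolding cvnorm_L2 by (intro L2_set_cong) (auto simp: norm_mult mat_diag_def)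
  also have "\<dots> \<le> L2_set (\<lambda>i. cmod (z $ i)) {..<n}"
    by (intro L2_set_mono) (auto intro: mult_left_le_one_le g)
  finally show ?thesis unfolding cvnorm_L2 using z by simp
qed

lemma F_op_contraction:
  assumes H: "hermitian_mat d H" and d: "0 < d" and b: "0 \<le> b" and x: "x \<in> carrier_vec d"
  shows "cvnorm (F_op b H *\<^sub>v x) \<le> cvnorm x"
proof -
  obtain U \<mu> where U: "unitary_mat d U" and le: "\<And>p. p < d \<Longrightarrow> lam_min H \<le> \<mu> p"
    and F: "F_op b H = U * mat_diag d (\<lambda>p. complex_of_real (exp (- b * (\<mu> p - lam_min H)))) * adj U"
    using F_op_spectral[OF H d] by metis
  define E where "E = mat_diag d (\<lambda>p. complex_of_real (exp (- b * (\<mu> p - lam_min H))))"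
  note Uc = unitary_carrier[OF U]
  have y: "adj U *\<^sub>v x \<in> carrier_vec d" using adj_carrier[OF Uc] x by (rule mult_mat_vec_carrier)
  have Ec: "E \<in> carrier_mat d d" unfolding E_def by simp
  have "F_op b H *\<^sub>v x = (U * E) *\<^sub>v (adj U *\<^sub>v x)"
    unfolding F E_def[symmetric] using Uc Ec x by (intro assoc_mult_mat_vec) auto
  also have "\<dots> = U *\<^sub>v (E *\<^sub>v (adj U *\<^sub>v x))" using Uc Ec y by (rule assoc_mult_mat_vec)
  finally have "cvnorm (F_op b H *\<^sub>v x) = cvnorm (U *\<^sub>v (E *\<^sub>v (adj U *\<^sub>v x)))" by simp
  also have "\<dots> = cvnorm (E *\<^sub>v (adj U *\<^sub>v x))"
    by (rule unitary_cvnorm[OF U mult_mat_vec_carrier[OF Ec y]])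
  also have "\<dots> \<le> cvnorm (adj U *\<^sub>v x)"
    unfolding E_def using le b by (intro mat_diag_contraction[OF y]) (simp add: mult_nonneg_nonneg)
  also have "\<dots> = cvnorm x" by (rule unitary_cvnorm[OF unitary_adj[OF U] x])
  finally show ?thesis .
qed

lemma F_op_fixed_unit_vector:
  assumes H: "hermitian_mat d H" and d: "0 < d"
  obtains v where "v \<in> carrier_vec d" "cvnorm v = 1" "\<And>b. F_op b H *\<^sub>v v = v"
proof -
  obtain U \<mu> p0 where U: "unitary_mat d U" and p0: "p0 < d" "\<mu> p0 = lam_min H"
    and F: "\<And>b. F_op b H = U * mat_diag d (\<lambda>p. complex_of_real (exp (- b * (\<mu> p - lam_min H)))) * adj U"
    using F_op_spectral[OF H d] by metis
  note Uc = unitary_carrier[OF U]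
  have "F_op b H *\<^sub>v col U p0 = col U p0" for b
    using col_mult2[OF F_op_carrier[OF H] Uc p0(1), of b]
    unfolding F unitary_diag_mult_unitary[OF U] col_mult_mat_diag[OF Uc p0(1)] p0(2) by simp
  moreover have "col U p0 \<in> carrier_vec d" using col_carrier_vec[OF p0(1) Uc] .
  ultimately show ?thesis using that unitary_col_cvnorm[OF U p0(1)] by blast
qed

lemma p_psi_zero:
  assumes "hermitian_mat d H" "0 < d" "\<Psi> \<in> carrier_vec d" "cvnorm \<Psi> = 1"
  shows "p_psi H \<Psi> 0 = 1"
  unfolding p_psi_def F_op_zero[OF assms(1,2)] using assms(3,4) by simp

lemma p_psi_pos:
  assumes H: "hermitian_mat d H" and d: "0 < d" and \<Psi>: "\<Psi> \<in> carrier_vec d" "cvnorm \<Psi> = 1"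
  shows "0 < p_psi H \<Psi> b"
proof -
  have inv: "F_op (- b) H *\<^sub>v (F_op b H *\<^sub>v \<Psi>) = \<Psi>"
    using F_op_mult_vec_add[OF H d \<Psi>(1), of "- b" b] F_op_zero[OF H d] \<Psi>(1) by simp
  have "F_op b H *\<^sub>v \<Psi> \<noteq> 0\<^sub>v d"
  proof
    assume "F_op b H *\<^sub>v \<Psi> = 0\<^sub>v d"
    with inv have "\<Psi> = 0\<^sub>v (dim_row H)" by (simp add: mult_mat_zero_vec)
    then show False using \<Psi>(2) by simp
  qed
  moreover have "dim_vec (F_op b H *\<^sub>v \<Psi>) = d" using carrier_vecD[OF F_op_mult_vec_carrier[OF H]] .
  ultimately have "cvnorm (F_op b H *\<^sub>v \<Psi>) \<noteq> 0" by (simp add: cvnorm_eq_0_iff)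
  then show ?thesis unfolding p_psi_def by simp
qed

lemma p_psi_antimono:
  assumes H: "hermitian_mat d H" and d: "0 < d" and \<Psi>: "\<Psi> \<in> carrier_vec d" and ab: "0 \<le> a" "a \<le> b"
  shows "p_psi H \<Psi> b \<le> p_psi H \<Psi> a"
proof -
  have "F_op b H *\<^sub>v \<Psi> = F_op (b - a) H *\<^sub>v (F_op a H *\<^sub>v \<Psi>)"
    using F_op_mult_vec_add[OF H d \<Psi>, of "b - a" a] by simp
  then have "cvnorm (F_op b H *\<^sub>v \<Psi>) \<le> cvnorm (F_op a H *\<^sub>v \<Psi>)"
    using F_op_contraction[OF H d, of "b - a" "F_op a H *\<^sub>v \<Psi>"] ab F_op_mult_vec_carrier[OF H] by simp
  then show ?thesis unfolding p_psi_def by (intro power_mono) auto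
qed

section \<open>Block encodings\<close>

lemma cvnorm_mult_mat_vec_le:
  assumes A: "A \<in> carrier_mat n k" and v: "v \<in> carrier_vec k"
  shows "cvnorm (A *\<^sub>v v) \<le> (\<Sum>i<n. \<Sum>j<k. cmod (A $$ (i, j))) * cvnorm v"
proof -
  have "cvnorm (A *\<^sub>v v) \<le> (\<Sum>i<n. cmod ((A *\<^sub>v v) $ i))"
    using cvnorm_le_sum_cmod[of "A *\<^sub>v v"] A by simp
  also have "\<dots> \<le> (\<Sum>i<n. (\<Sum>j<k. cmod (A $$ (i, j))) * cvnorm v)"
  proof (rule sum_mono)
    fix i assume "i \<in> {..<n}"
    then have "cmod ((A *\<^sub>v v) $ i) = cmod (\<Sum>j<k. A $$ (i, j) * v $ j)"
      using A v by (simp add: scalar_prod_def atLeast0LessThan)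
    also have "\<dots> \<le> (\<Sum>j<k. cmod (A $$ (i, j)) * cmod (v $ j))"
      by (rule order_trans[OF norm_sum]) (simp add: norm_mult)
    also have "\<dots> \<le> (\<Sum>j<k. cmod (A $$ (i, j)) * cvnorm v)"
      using v by (intro sum_mono mult_left_mono cmod_le_cvnorm) auto
    finally show "cmod ((A *\<^sub>v v) $ i) \<le> (\<Sum>j<k. cmod (A $$ (i, j))) * cvnorm v"
      by (simp add: sum_distrib_right)
  qed
  finally show ?thesis by (simp add: sum_distrib_right)
qed

lemma op_norm_bound:
  assumes A: "A \<in> carrier_mat n k" and x: "x \<in> carrier_vec k"
  shows "cvnorm (A *\<^sub>v x) \<le> op_norm A * cvnorm x"
proof (cases "cvnorm x = 0")
  case True
  then have "x = 0\<^sub>v k" using cvnorm_eq_0_iff[of x] x by simp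
  then show ?thesis using True A by (simp add: mult_mat_zero_vec)
next
  case False
  then have xp: "0 < cvnorm x" using cvnorm_nonneg[of x] by linarith
  define y where "y = complex_of_real (1 / cvnorm x) \<cdot>\<^sub>v x"
  have y: "y \<in> carrier_vec (dim_col A)" "cvnorm y = 1"
    using A x xp unfolding y_def cvnorm_smult by (auto simp: norm_divide)
  have "bdd_above {cvnorm (A *\<^sub>v v) |v. v \<in> carrier_vec (dim_col A) \<and> cvnorm v = 1}"
  proof (rule bdd_aboveI)
    fix s assume "s \<in> {cvnorm (A *\<^sub>v v) |v. v \<in> carrier_vec (dim_col A) \<and> cvnorm v = 1}"
    then obtain v where "v \<in> carrier_vec k" "cvnorm v = 1" "s = cvnorm (A *\<^sub>v v)" using A by auto
    then show "s \<le> (\<Sum>i<n. \<Sum>j<k. cmod (A $$ (i, j)))" using cvnorm_mult_mat_vec_le[OF A] by force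
  qed
  then have "cvnorm (A *\<^sub>v y) \<le> op_norm A"
    unfolding op_norm_def using y by (intro cSup_upper) auto
  moreover have "A *\<^sub>v x = complex_of_real (cvnorm x) \<cdot>\<^sub>v (A *\<^sub>v y)"
    unfolding y_def mult_mat_vec_smult smult_smult_assoc using xp by simp
  ultimately show ?thesis using xp by (simp add: cvnorm_smult mult.commute)
qed

lemma sum_lessThan_mult_stride:
  fixes g :: "nat \<Rightarrow> 'a::comm_monoid_add"
  assumes m: "0 < m" and g: "\<And>l. l < d * m \<Longrightarrow> l mod m \<noteq> 0 \<Longrightarrow> g l = 0"
  shows "(\<Sum>l<d * m. g l) = (\<Sum>j<d. g (j * m))"
proof -
  have inj: "inj_on (\<lambda>j. j * m) {..<d}" using m by (auto simp: inj_on_def)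
  have sub: "(\<lambda>j. j * m) ` {..<d} \<subseteq> {..<d * m}" using m by auto
  have "(\<Sum>l<d * m. g l) = (\<Sum>l\<in>(\<lambda>j. j * m) ` {..<d}. g l)"
  proof (rule sum.mono_neutral_right[OF _ sub])
    show "\<forall>l\<in>{..<d * m} - (\<lambda>j. j * m) ` {..<d}. g l = 0"
    proof
      fix l assume l: "l \<in> {..<d * m} - (\<lambda>j. j * m) ` {..<d}"
      have "l mod m \<noteq> 0"
      proof
        assume "l mod m = 0"
        then obtain j where "l = j * m" by (metis mod_eq_0_iff_dvd dvdE mult.commute)
        with l m show False by auto
      qed
      with l show "g l = 0" by (intro g) auto
    qed
  qed simp
  also have "\<dots> = (\<Sum>j<d. g (j * m))" by (rule sum.reindex[OF inj, unfolded comp_def])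
  finally show ?thesis .
qed

text \<open>\<open>\<langle>0|U|0\<rangle> x\<close> is a subvector of \<open>U (x \<otimes> |0\<rangle>)\<close>, which has the norm of \<open>x\<close>.\<close>

lemma anc0_block_contraction:
  assumes m: "0 < m" and U: "unitary_mat (d * m) U" and x: "x \<in> carrier_vec d"
  shows "cvnorm (anc0_block d m U *\<^sub>v x) \<le> cvnorm x"
proof -
  define x' where "x' = vec (d * m) (\<lambda>l. if l mod m = 0 then x $ (l div m) else 0)"
  have x': "x' \<in> carrier_vec (d * m)" unfolding x'_def by simp
  note Uc = unitary_carrier[OF U]
  have jm: "j * m < d * m" if "j < d" for j using that m by simp
  have x'_stride: "x' $ (j * m) = x $ j" if "j < d" for j using that m jm by (simp add: x'_def)
  have "(cvnorm x')\<^sup>2 = (\<Sum>l<d * m. (cmod (x' $ l))\<^sup>2)" unfolding cvnorm_power2 using x' by simp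
  also have "\<dots> = (\<Sum>j<d. (cmod (x' $ (j * m)))\<^sup>2)"
    by (rule sum_lessThan_mult_stride[OF m]) (simp add: x'_def)
  also have "\<dots> = (cvnorm x)\<^sup>2"
    unfolding cvnorm_power2 using x by (auto simp: x'_stride)
  finally have nx': "cvnorm x' = cvnorm x" by (simp add: power2_eq_iff_nonneg)
  have entry: "(anc0_block d m U *\<^sub>v x) $ i = (U *\<^sub>v x') $ (i * m)" if i: "i < d" for i
  proof -
    have "(U *\<^sub>v x') $ (i * m) = (\<Sum>l<d * m. U $$ (i * m, l) * x' $ l)"
      using Uc x' jm[OF i] by (simp add: scalar_prod_def atLeast0LessThan)
    also have "\<dots> = (\<Sum>j<d. U $$ (i * m, j * m) * x' $ (j * m))"
      by (rule sum_lessThan_mult_stride[OF m]) (simp add: x'_def)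
    also have "\<dots> = (anc0_block d m U *\<^sub>v x) $ i"
      using i x m jm by (simp add: x'_def anc0_block_def scalar_prod_def atLeast0LessThan)
    finally show ?thesis by simp
  qed
  have "dim_vec (anc0_block d m U *\<^sub>v x) = d" by (simp add: anc0_block_def)
  then have "(cvnorm (anc0_block d m U *\<^sub>v x))\<^sup>2 = (\<Sum>j<d. (cmod ((U *\<^sub>v x') $ (j * m)))\<^sup>2)"
    unfolding cvnorm_power2 by (intro sum.cong) (simp_all only: lessThan_iff entry)
  also have "\<dots> = (\<Sum>l\<in>(\<lambda>j. j * m) ` {..<d}. (cmod ((U *\<^sub>v x') $ l))\<^sup>2)"
    using m by (subst sum.reindex) (auto simp: inj_on_def)
  also have "\<dots> \<le> (\<Sum>l<d * m. (cmod ((U *\<^sub>v x') $ l))\<^sup>2)"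
    using jm by (intro sum_mono2) auto
  also have "\<dots> = (cvnorm (U *\<^sub>v x'))\<^sup>2" using Uc by (simp add: cvnorm_power2)
  also have "\<dots> = (cvnorm x)\<^sup>2" using unitary_cvnorm[OF U x'] nx' by simp
  finally show ?thesis by (rule power2_le_imp_le) simp
qed

lemma block_encoding_error:
  assumes U: "block_encoding d m \<epsilon> \<alpha> A U" and A: "A \<in> carrier_mat d d" and y: "y \<in> carrier_vec d"
  shows "cvnorm (anc0_block d m U *\<^sub>v y - complex_of_real \<alpha> \<cdot>\<^sub>v (A *\<^sub>v y)) \<le> \<epsilon> * cvnorm y"
proof -
  define E where "E = complex_of_real \<alpha> \<cdot>\<^sub>m A - anc0_block d m U"
  have M: "anc0_block d m U \<in> carrier_mat d d" by (simp add: anc0_block_def)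
  have Ec: "E \<in> carrier_mat d d" unfolding E_def using A M by auto
  have "E *\<^sub>v y = complex_of_real \<alpha> \<cdot>\<^sub>v (A *\<^sub>v y) - anc0_block d m U *\<^sub>v y"
    unfolding E_def using A M y
    by (subst minus_mult_distrib_mat_vec[of _ d d]) (auto simp: smult_mat_mult_vec)
  then have "cvnorm (anc0_block d m U *\<^sub>v y - complex_of_real \<alpha> \<cdot>\<^sub>v (A *\<^sub>v y)) = cvnorm (E *\<^sub>v y)"
    using A M by (simp add: cvnorm_minus_commute)
  also have "\<dots> \<le> op_norm E * cvnorm y" by (rule op_norm_bound[OF Ec y])
  also have "\<dots> \<le> \<epsilon> * cvnorm y"
    using U unfolding block_encoding_def E_def by (intro mult_right_mono) auto
  finally show ?thesis .
qed

text \<open>Compare \<open>\<alpha> v\<close> with \<open>\<langle>0|U|0\<rangle> v\<close>, whose norm is at most \<open>\<parallel>v\<parallel> = 1\<close>.\<close>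

lemma block_encoding_scale_le:
  assumes U: "block_encoding d m \<epsilon> \<alpha> A U" and A: "A \<in> carrier_mat d d"
    and v: "v \<in> carrier_vec d" "cvnorm v = 1" and Av: "A *\<^sub>v v = v"
  shows "\<alpha> \<le> 1 + \<epsilon>"
proof -
  let ?M = "anc0_block d m U"
  have M: "?M \<in> carrier_mat d d" by (simp add: anc0_block_def)
  have "\<bar>\<alpha>\<bar> = cvnorm (complex_of_real \<alpha> \<cdot>\<^sub>v v)" using v by (simp add: cvnorm_smult)
  also have "\<dots> \<le> cvnorm (?M *\<^sub>v v) + cvnorm (complex_of_real \<alpha> \<cdot>\<^sub>v v - ?M *\<^sub>v v)"
    using M v by (intro cvnorm_le_add_diff) auto
  also have "cvnorm (complex_of_real \<alpha> \<cdot>\<^sub>v v - ?M *\<^sub>v v) \<le> \<epsilon>"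
    using block_encoding_error[OF U A v(1)] M v by (simp add: Av cvnorm_minus_commute)
  also have "cvnorm (?M *\<^sub>v v) \<le> 1"
    using U v unfolding block_encoding_def by (metis anc0_block_contraction)
  finally show ?thesis by simp
qed

lemma normalize_vec_dim [simp]: "dim_vec (normalize_vec x) = dim_vec x"
  unfolding normalize_vec_def by simp

lemma normalize_vec_cvnorm: "0 < cvnorm x \<Longrightarrow> cvnorm (normalize_vec x) = 1"
  unfolding normalize_vec_def cvnorm_smult by (simp add: norm_divide)

lemma normalize_vec_smult:
  "0 < r \<Longrightarrow> normalize_vec (complex_of_real r \<cdot>\<^sub>v x) = normalize_vec x"
  unfolding normalize_vec_def cvnorm_smult by (intro eq_vecI) auto

lemma normalize_vec_mult_normalize:
  "normalize_vec (A *\<^sub>v normalize_vec x) = normalize_vec (A *\<^sub>v x)"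
proof (cases "cvnorm x = 0")
  case True
  then have "x = 0\<^sub>v (dim_vec x)" by (simp add: cvnorm_eq_0_iff)
  then obtain n where "x = 0\<^sub>v n" by blast
  moreover have "c \<cdot>\<^sub>v 0\<^sub>v n = 0\<^sub>v n" for c :: complex by (intro eq_vecI) auto
  ultimately show ?thesis unfolding normalize_vec_def by (simp add: mult_mat_zero_vec)
next
  case False
  then have "0 < 1 / cvnorm x" using cvnorm_nonneg[of x] by (simp add: order_less_le)
  then show ?thesis unfolding normalize_vec_def[of x] mult_mat_vec_smult by (rule normalize_vec_smult)
qed

lemma normalize_vec_diff:
  assumes xy: "dim_vec x = dim_vec y" and y: "0 < cvnorm y"
  shows "cvnorm (normalize_vec x - normalize_vec y) \<le> 2 * cvnorm (x - y) / cvnorm y"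
proof -
  define a where "a = 1 / cvnorm x - 1 / cvnorm y"
  have "normalize_vec x - normalize_vec y
      = complex_of_real a \<cdot>\<^sub>v x + complex_of_real (1 / cvnorm y) \<cdot>\<^sub>v (x - y)"
    unfolding normalize_vec_def a_def using xy by (intro eq_vecI) (auto simp: algebra_simps)
  then have "cvnorm (normalize_vec x - normalize_vec y)
      \<le> cvnorm (complex_of_real a \<cdot>\<^sub>v x) + cvnorm (complex_of_real (1 / cvnorm y) \<cdot>\<^sub>v (x - y))"
    using xy by (simp add: cvnorm_triangle)
  also have "\<dots> = \<bar>a\<bar> * cvnorm x + cvnorm (x - y) / cvnorm y"
    unfolding cvnorm_smult using y by (simp add: norm_divide)
  also have "\<bar>a\<bar> * cvnorm x \<le> cvnorm (x - y) / cvnorm y"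
  proof (cases "cvnorm x = 0")
    case False
    then have "\<bar>a\<bar> * cvnorm x = \<bar>cvnorm y - cvnorm x\<bar> / cvnorm y"
      using cvnorm_nonneg[of x] y by (simp add: a_def field_simps abs_divide)
    also have "\<dots> \<le> cvnorm (x - y) / cvnorm y"
      using cvnorm_diff_abs_le[OF xy] y by (intro divide_right_mono) (auto simp: abs_minus_commute)
    finally show ?thesis .
  qed (use y in simp)
  finally show ?thesis by simp
qed

lemma trace_dist_pure_le_cvnorm_diff:
  assumes "dim_vec a = dim_vec b" "cvnorm a = 1" "cvnorm b = 1"
  shows "trace_dist_pure a b \<le> cvnorm (a - b)"
proof -
  let ?c = "cinner a b"
  have "(cvnorm (a - b))\<^sup>2 = 2 - 2 * Re ?c" using cvnorm_diff_power2[OF assms(1)] assms by simp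
  moreover have "Re ?c \<le> cmod ?c" by (rule complex_Re_le_cmod)
  moreover have "0 \<le> (1 - cmod ?c)\<^sup>2" by simp
  ultimately have "1 - (cmod ?c)\<^sup>2 \<le> (cvnorm (a - b))\<^sup>2" by (simp add: power2_diff)
  then show ?thesis unfolding trace_dist_pure_def by (metis cvnorm_nonneg real_sqrt_abs real_sqrt_le_mono abs_of_nonneg)
qed

section \<open>The restart loop\<close>

primrec frag_vec :: "(nat \<Rightarrow> complex mat) \<Rightarrow> complex vec \<Rightarrow> nat \<Rightarrow> complex vec" where
  "frag_vec M \<Psi> 0 = \<Psi>"
| "frag_vec M \<Psi> (Suc l) = M (Suc l) *\<^sub>v frag_vec M \<Psi> l"

lemma frag_state_eq_normalize:
  assumes "cvnorm \<Psi> = 1"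
  shows "frag_state M \<Psi> l = normalize_vec (frag_vec M \<Psi> l)"
proof (induction l)
  case 0
  show ?case using assms by (simp add: normalize_vec_def)
next
  case (Suc l)
  then show ?case by (simp add: normalize_vec_mult_normalize)
qed

text \<open>No nondegeneracy hypotheses are needed here: once a state vanishes, all later ones do,
  and the junk value \<open>x / 0 = 0\<close> makes both sides zero.\<close>

lemma frag_succ_prob_eq:
  assumes "cvnorm \<Psi> = 1"
  shows "frag_succ_prob M \<Psi> (Suc l) = (cvnorm (frag_vec M \<Psi> (Suc l)) / cvnorm (frag_vec M \<Psi> l))\<^sup>2"
  unfolding frag_succ_prob_def frag_state_eq_normalize[OF assms] normalize_vec_def mult_mat_vec_smult
  by (simp add: cvnorm_smult norm_divide)

lemma frag_prod_succ_prob: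
  assumes \<Psi>: "cvnorm \<Psi> = 1"
  shows "(\<Prod>k\<in>{1..l}. frag_succ_prob M \<Psi> k) = (cvnorm (frag_vec M \<Psi> l))\<^sup>2"
proof (induction l)
  case 0
  show ?case using \<Psi> by simp
next
  case (Suc l)
  have "(\<Prod>k\<in>{1..Suc l}. frag_succ_prob M \<Psi> k)
      = (cvnorm (frag_vec M \<Psi> (Suc l)) / cvnorm (frag_vec M \<Psi> l))\<^sup>2 * (cvnorm (frag_vec M \<Psi> l))\<^sup>2"
    using Suc by (simp add: prod.nat_ivl_Suc' frag_succ_prob_eq[OF \<Psi>])
  also have "\<dots> = (cvnorm (frag_vec M \<Psi> (Suc l)))\<^sup>2"
  proof (cases "cvnorm (frag_vec M \<Psi> l) = 0")
    case True
    then have "frag_vec M \<Psi> l = 0\<^sub>v (dim_vec (frag_vec M \<Psi> l))" by (simp add: cvnorm_eq_0_iff)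
    then obtain n where "frag_vec M \<Psi> l = 0\<^sub>v n" by blast
    then show ?thesis by (simp add: mult_mat_zero_vec)
  qed (simp add: power_divide)
  finally show ?case .
qed

lemma frag_attempt_succ_eq:
  "cvnorm \<Psi> = 1 \<Longrightarrow> frag_attempt_succ M \<Psi> r = (cvnorm (frag_vec M \<Psi> r))\<^sup>2"
  unfolding frag_attempt_succ_def by (rule frag_prod_succ_prob)

lemma frag_reach_prob_eq:
  assumes "cvnorm \<Psi> = 1"
  shows "frag_reach_prob M \<Psi> l = (cvnorm (frag_vec M \<Psi> (l - 1)))\<^sup>2"
proof -
  have "{1..<l} = {1..l - 1}" by auto
  then show ?thesis unfolding frag_reach_prob_def using frag_prod_succ_prob[OF assms] by simp
qed

lemma suminf_restart:
  fixes a c :: real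
  assumes "0 < a" "a \<le> 1"
  shows "(\<Sum>t. (1 - a) ^ t * c) = c / a"
proof -
  have "norm (1 - a) < 1" using assms by simp
  from sums_mult2[OF geometric_sums[OF this], of c]
  show ?thesis by (simp add: sums_iff)
qed

lemma frag_halt_prob_eq_1:
  assumes "cvnorm \<Psi> = 1" "0 < cvnorm (frag_vec M \<Psi> r)" "cvnorm (frag_vec M \<Psi> r) \<le> 1"
  shows "frag_halt_prob M \<Psi> r = 1"
  unfolding frag_halt_prob_def frag_attempt_succ_eq[OF assms(1)] using assms(2,3)
  by (subst suminf_restart) (auto simp: power_le_one)

lemma frag_expected_runs_eq:
  assumes "cvnorm \<Psi> = 1" "0 < cvnorm (frag_vec M \<Psi> r)" "cvnorm (frag_vec M \<Psi> r) \<le> 1"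
  shows "frag_expected_runs M \<Psi> r l = (cvnorm (frag_vec M \<Psi> (l - 1)))\<^sup>2 / (cvnorm (frag_vec M \<Psi> r))\<^sup>2"
  unfolding frag_expected_runs_def frag_attempt_succ_eq[OF assms(1)] frag_reach_prob_eq[OF assms(1)]
  using assms(2,3) by (subst suminf_restart) (auto simp: power_le_one)

section \<open>Error analysis of the fragmented algorithm\<close>

lemma abs_power2_diff_le:
  fixes s t \<delta> :: real
  assumes s: "\<bar>s - 1\<bar> \<le> \<delta>" and t: "\<bar>t - 1\<bar> \<le> \<delta>" and \<delta>: "0 \<le> \<delta>" "\<delta> \<le> 1/150"
  shows "\<bar>s\<^sup>2 - t\<^sup>2\<bar> \<le> 5 * \<delta> * t\<^sup>2"
proof -
  have "s\<^sup>2 - t\<^sup>2 = (s - t) * (s + t)" by (simp add: power2_eq_square algebra_simps)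
  then have "\<bar>s\<^sup>2 - t\<^sup>2\<bar> = \<bar>s - t\<bar> * (s + t)" using s t \<delta> by (simp add: abs_mult)
  also have "\<dots> \<le> (2 * \<delta>) * (2 + 2 * \<delta>)" using s t \<delta> by (intro mult_mono) auto
  also have "\<dots> \<le> 5 * \<delta> * (1 - \<delta>)\<^sup>2"
  proof -
    have "5 * \<delta> * (1 - \<delta>)\<^sup>2 - (2 * \<delta>) * (2 + 2 * \<delta>) = \<delta> * (1 - 14 * \<delta>) + 5 * \<delta> ^ 3"
      by (simp add: power2_eq_square power3_eq_cube algebra_simps)
    moreover have "0 \<le> \<delta> * (1 - 14 * \<delta>)" "0 \<le> \<delta> ^ 3" using \<delta> by simp_all
    ultimately show ?thesis by linarith
  qed
  also have "\<dots> \<le> 5 * \<delta> * t\<^sup>2" using t \<delta> by (intro mult_left_mono power_mono) auto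
  finally show ?thesis .
qed

lemma ratio_power2_rel_error:
  fixes u v x y \<delta> :: real
  assumes x: "0 < x" and y: "0 < y" and u: "\<bar>u - x\<bar> \<le> \<delta> * x" and v: "\<bar>v - y\<bar> \<le> \<delta> * y"
    and \<delta>: "0 \<le> \<delta>" "\<delta> \<le> 1/150"
  shows "\<bar>u\<^sup>2 / v\<^sup>2 - x\<^sup>2 / y\<^sup>2\<bar> \<le> 5 * \<delta> * (x\<^sup>2 / y\<^sup>2)"
proof -
  have s: "\<bar>u / x - 1\<bar> \<le> \<delta>" and t: "\<bar>v / y - 1\<bar> \<le> \<delta>"
    using u v x y by (simp_all add: abs_le_iff field_simps)
  then have t0: "0 < v / y" using \<delta> by auto
  have "u\<^sup>2 / v\<^sup>2 - x\<^sup>2 / y\<^sup>2 = ((u / x)\<^sup>2 - (v / y)\<^sup>2) / (v / y)\<^sup>2 * (x\<^sup>2 / y\<^sup>2)"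
    using x y t0 by (simp add: field_simps power2_eq_square)
  also have "\<bar>\<dots>\<bar> = \<bar>(u / x)\<^sup>2 - (v / y)\<^sup>2\<bar> / (v / y)\<^sup>2 * (x\<^sup>2 / y\<^sup>2)"
    by (simp add: abs_mult abs_divide)
  also have "\<dots> \<le> 5 * \<delta> * (x\<^sup>2 / y\<^sup>2)"
    using abs_power2_diff_le[OF s t \<delta>] t0 by (intro mult_right_mono) (auto simp: divide_le_eq)
  finally show ?thesis .
qed

locale fragmented_qite =
  fixes d :: nat and H :: "complex mat" and \<Psi> :: "complex vec" and \<beta> \<epsilon> :: real and r :: nat
    and \<Delta>\<beta> \<alpha> \<epsilon>' :: "nat \<Rightarrow> real" and m :: "nat \<Rightarrow> nat" and U :: "nat \<Rightarrow> complex mat"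
  assumes d: "0 < d" and H: "hermitian_mat d H" and \<Psi>: "\<Psi> \<in> carrier_vec d" "cvnorm \<Psi> = 1"
    and \<epsilon>: "0 \<le> \<epsilon>" "\<epsilon> \<le> 1/100"
    and \<Delta>\<beta>_pos: "\<forall>l\<in>{1..r}. 0 < \<Delta>\<beta> l" and \<beta>_sum: "(\<Sum>l=1..r. \<Delta>\<beta> l) = \<beta>"
    and primitive: "\<forall>l\<in>{1..r}. 0 < \<alpha> l \<and> qite_primitive d H (\<Delta>\<beta> l) (\<epsilon>' l) (\<alpha> l) (m l) (U l)"
    and precision_1: "1 \<le> r \<longrightarrow> \<epsilon>' 1 \<le> \<epsilon> * (\<Prod>k=1..r. \<alpha> k) / (2 * 4 ^ (r - 1)) * sqrt (p_psi H \<Psi> \<beta>)"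
    and precision: "\<forall>l\<in>{2..r}. \<epsilon>' l \<le> \<epsilon> * (\<Prod>k=l..r. \<alpha> k) / 4 ^ (r - l + 1) *
          sqrt (p_psi H \<Psi> \<beta> / p_psi H \<Psi> (\<Sum>k=1..l-1. \<Delta>\<beta> k))"
begin

definition M :: "nat \<Rightarrow> complex mat" where "M = (\<lambda>l. anc0_block d (m l) (U l))"

definition beta_upto :: "nat \<Rightarrow> real" where "beta_upto l = (\<Sum>k=1..l. \<Delta>\<beta> k)"

definition alpha_upto :: "nat \<Rightarrow> real" where "alpha_upto l = (\<Prod>k=1..l. \<alpha> k)"

abbreviation p :: "real \<Rightarrow> real" where "p \<equiv> p_psi H \<Psi>"

abbreviation actual :: "nat \<Rightarrow> complex vec" where "actual \<equiv> frag_vec M \<Psi>"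

text \<open>What \<open>actual l\<close> would be if the primitives were exact block encodings.\<close>

definition ideal :: "nat \<Rightarrow> complex vec" where
  "ideal l = complex_of_real (alpha_upto l) \<cdot>\<^sub>v (F_op (beta_upto l) H *\<^sub>v \<Psi>)"

lemma M_carrier: "M l \<in> carrier_mat d d"
  unfolding M_def anc0_block_def by simp

lemma actual_carrier: "actual l \<in> carrier_vec d"
  by (induction l) (simp_all add: \<Psi> M_carrier[THEN mult_mat_vec_carrier])

lemma ideal_carrier: "ideal l \<in> carrier_vec d"
  unfolding ideal_def using H by simp

lemma block_encoding_M:
  "l \<in> {1..r} \<Longrightarrow> block_encoding d (m l) (\<epsilon>' l) (\<alpha> l) (F_op (\<Delta>\<beta> l) H) (U l)"
  using primitive unfolding qite_primitive_def by auto

lemma M_contraction: "l \<in> {1..r} \<Longrightarrow> x \<in> carrier_vec d \<Longrightarrow> cvnorm (M l *\<^sub>v x) \<le> cvnorm x"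
  using block_encoding_M anc0_block_contraction unfolding M_def block_encoding_def by blast

lemma alpha_pos: "l \<in> {1..r} \<Longrightarrow> 0 < \<alpha> l"
  using primitive by auto

lemma alpha_le_1_plus_eps':
  assumes l: "l \<in> {1..r}"
  shows "\<alpha> l \<le> 1 + \<epsilon>' l"
proof -
  obtain v where "v \<in> carrier_vec d" "cvnorm v = 1" "\<And>b. F_op b H *\<^sub>v v = v"
    using F_op_fixed_unit_vector[OF H d] by blast
  then show ?thesis by (intro block_encoding_scale_le[OF block_encoding_M[OF l] F_op_carrier[OF H]])
qed

lemma beta_upto_Suc: "beta_upto (Suc l) = beta_upto l + \<Delta>\<beta> (Suc l)"
  unfolding beta_upto_def by simp

lemma beta_upto_nonneg: "l \<le> r \<Longrightarrow> 0 \<le> beta_upto l"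
  unfolding beta_upto_def using \<Delta>\<beta>_pos by (intro sum_nonneg) (auto simp: less_imp_le)

lemma beta_upto_le: "l \<le> r \<Longrightarrow> beta_upto l \<le> \<beta>"
  unfolding beta_upto_def \<beta>_sum[symmetric] using \<Delta>\<beta>_pos by (intro sum_mono2) (auto simp: less_imp_le)

lemma p_pos: "0 < p b"
  by (rule p_psi_pos[OF H d \<Psi>])

lemma p_beta_le: "l \<le> r \<Longrightarrow> p \<beta> \<le> p (beta_upto l)"
  using p_psi_antimono[OF H d \<Psi>(1)] beta_upto_nonneg beta_upto_le by simp

lemma alpha_upto_pos: "l \<le> r \<Longrightarrow> 0 < alpha_upto l"
  unfolding alpha_upto_def using alpha_pos by (intro prod_pos) auto

lemma alpha_upto_split: "l \<le> r \<Longrightarrow> alpha_upto r = alpha_upto l * (\<Prod>k=Suc l..r. \<alpha> k)"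
proof -
  assume "l \<le> r"
  then have "{1..r} = {1..l} \<union> {Suc l..r}" by auto
  then show ?thesis unfolding alpha_upto_def by (simp add: prod.union_disjoint)
qed

lemma ideal_cvnorm: "l \<le> r \<Longrightarrow> cvnorm (ideal l) = alpha_upto l * sqrt (p (beta_upto l))"
  unfolding ideal_def cvnorm_smult p_psi_def using alpha_upto_pos[of l] by simp

lemma ideal_cvnorm_pos: "l \<le> r \<Longrightarrow> 0 < cvnorm (ideal l)"
  using ideal_cvnorm alpha_upto_pos p_pos by simp

lemma ideal_0: "ideal 0 = \<Psi>"
  unfolding ideal_def alpha_upto_def beta_upto_def using F_op_zero[OF H d] \<Psi>(1) by simp

lemma ideal_Suc: "ideal (Suc l) = complex_of_real (\<alpha> (Suc l)) \<cdot>\<^sub>v (F_op (\<Delta>\<beta> (Suc l)) H *\<^sub>v ideal l)"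
  unfolding ideal_def mult_mat_vec_smult beta_upto_Suc F_op_mult_vec_add[OF H d \<Psi>(1)]
  by (simp add: alpha_upto_def smult_smult_assoc mult.commute add.commute)

text \<open>Each step adds the block-encoding error of the new primitive applied to the ideal
  state; the error already present is not amplified since \<open>M l\<close> is a contraction.\<close>

lemma error_Suc:
  assumes "Suc l \<le> r"
  shows "cvnorm (actual (Suc l) - ideal (Suc l)) \<le> cvnorm (actual l - ideal l) + \<epsilon>' (Suc l) * cvnorm (ideal l)"
proof -
  have l: "Suc l \<in> {1..r}" using assms by simp
  define e where "e = M (Suc l) *\<^sub>v ideal l - ideal (Suc l)"
  have "M (Suc l) *\<^sub>v (actual l - ideal l) = M (Suc l) *\<^sub>v actual l - M (Suc l) *\<^sub>v ideal l"
    by (rule mult_minus_distrib_mat_vec[OF M_carrier actual_carrier ideal_carrier])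
  then have split: "actual (Suc l) - ideal (Suc l) = M (Suc l) *\<^sub>v (actual l - ideal l) + e"
    unfolding e_def using M_carrier[of "Suc l"] ideal_carrier[of "Suc l"] by (intro eq_vecI) auto
  have "cvnorm (actual (Suc l) - ideal (Suc l)) \<le> cvnorm (M (Suc l) *\<^sub>v (actual l - ideal l)) + cvnorm e"
    unfolding split
    by (rule cvnorm_triangle) (use M_carrier[of "Suc l"] carrier_vecD[OF ideal_carrier] in \<open>simp add: e_def\<close>)
  also have "\<dots> \<le> cvnorm (actual l - ideal l) + \<epsilon>' (Suc l) * cvnorm (ideal l)"
    using M_contraction[OF l, of "actual l - ideal l"] actual_carrier ideal_carrier
      block_encoding_error[OF block_encoding_M[OF l] F_op_carrier[OF H] ideal_carrier]
    unfolding e_def ideal_Suc M_def by (intro add_mono) auto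
  finally show ?thesis .
qed

lemma alpha_prod_nonneg: "0 < l \<Longrightarrow> 0 \<le> (\<Prod>k=l..r. \<alpha> k)"
  using alpha_pos by (intro prod_nonneg) (auto simp: less_imp_le)

text \<open>The two precision hypotheses in a uniform shape (with \<open>beta_upto 0 = 0\<close>).\<close>

lemma eps'_bound:
  assumes l: "l \<in> {1..r}"
  shows "\<epsilon>' l * sqrt (p (beta_upto (l - 1))) \<le> 2 * \<epsilon> * (\<Prod>k=l..r. \<alpha> k) / 4 ^ (r - l + 1) * sqrt (p \<beta>)"
proof -
  have prod_nonneg: "0 \<le> (\<Prod>k=l..r. \<alpha> k)" using l by (intro alpha_prod_nonneg) simp
  show ?thesis
  proof (cases "l = 1")
    case True
    have "p (beta_upto 0) = 1" unfolding beta_upto_def using p_psi_zero[OF H d \<Psi>] by simp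
    moreover have "(4::real) ^ r = 4 * 4 ^ (r - 1)" using l by (cases r) auto
    ultimately show ?thesis using precision_1 l True by simp
  next
    case False
    then have l2: "l \<in> {2..r}" using l by auto
    have "sqrt (p \<beta> / p (beta_upto (l - 1))) * sqrt (p (beta_upto (l - 1))) = sqrt (p \<beta>)"
      using p_pos[of "beta_upto (l - 1)"] by (simp add: real_sqrt_divide)
    then have "\<epsilon>' l * sqrt (p (beta_upto (l - 1))) \<le> \<epsilon> * (\<Prod>k=l..r. \<alpha> k) / 4 ^ (r - l + 1) * sqrt (p \<beta>)"
      using precision l2 unfolding beta_upto_def
      by (metis (no_types, lifting) mult.assoc mult_right_mono real_sqrt_ge_zero p_pos less_imp_le)
    also have "\<dots> \<le> 2 * \<epsilon> * (\<Prod>k=l..r. \<alpha> k) / 4 ^ (r - l + 1) * sqrt (p \<beta>)"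
      using \<epsilon> prod_nonneg less_imp_le[OF p_pos] by (intro mult_right_mono divide_right_mono) auto
    finally show ?thesis .
  qed
qed

lemma eps'_le:
  assumes l: "l \<in> {1..r}"
  shows "\<epsilon>' l \<le> 2 * \<epsilon> * (\<Prod>k=l..r. \<alpha> k) / 4 ^ (r - l + 1)"
proof -
  let ?K = "2 * \<epsilon> * (\<Prod>k=l..r. \<alpha> k) / 4 ^ (r - l + 1)"
  let ?s = "sqrt (p (beta_upto (l - 1)))"
  have "0 \<le> ?K" using \<epsilon> alpha_prod_nonneg l by simp
  moreover have "l - 1 \<le> r" using l by auto
  then have "sqrt (p \<beta>) \<le> ?s" using p_beta_le by simp
  ultimately have "\<epsilon>' l * ?s \<le> ?K * ?s"
    using eps'_bound[OF l] by (meson mult_left_mono order_trans)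
  then show ?thesis by (rule mult_right_le_imp_le) (simp add: p_pos)
qed

text \<open>By downward induction: once \<open>\<alpha> k \<le> 2\<close> for all \<open>k > l\<close>, the precision hypothesis gives
  \<open>\<epsilon>' l \<le> \<epsilon> \<alpha> l / 2\<close>, and \<open>\<alpha> l \<le> 1 + \<epsilon>' l\<close> forces \<open>\<alpha> l \<le> 2\<close>.\<close>

lemma alpha_le_2: "l \<in> {1..r} \<Longrightarrow> \<alpha> l \<le> 2"
proof (induction "r - l" arbitrary: l rule: less_induct)
  case less
  have tail: "(\<Prod>k=Suc l..r. \<alpha> k) \<le> 4 ^ (r - l)"
  proof (rule prod_le_power)
    fix k assume "k \<in> {Suc l..r}"
    then have "k \<in> {1..r}" "r - k < r - l" using less.prems by auto
    then show "0 \<le> \<alpha> k \<and> \<alpha> k \<le> 4" using less.hyps alpha_pos by fastforce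
  qed simp_all
  have "(\<Prod>k=l..r. \<alpha> k) = \<alpha> l * (\<Prod>k=Suc l..r. \<alpha> k)"
    using less.prems by (intro prod.atLeast_Suc_atMost) auto
  also have "\<dots> \<le> \<alpha> l * 4 ^ (r - l)" using tail alpha_pos[OF less.prems] by simp
  finally have "\<epsilon>' l \<le> 2 * \<epsilon> * (\<alpha> l * 4 ^ (r - l)) / 4 ^ (r - l + 1)"
    using eps'_le[OF less.prems] \<epsilon> by (smt (verit) divide_right_mono mult_left_mono zero_le_power)
  then have "\<epsilon>' l \<le> \<epsilon> * \<alpha> l / 2" by simp
  moreover have "\<epsilon> * \<alpha> l \<le> \<alpha> l / 100" using \<epsilon> alpha_pos[OF less.prems] by simp
  ultimately show ?case using alpha_le_1_plus_eps'[OF less.prems] by simp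
qed

lemma alpha_tail_le: "(\<Prod>k=Suc l..r. \<alpha> k) \<le> 4 ^ (r - l)"
proof (rule prod_le_power)
  fix k assume "k \<in> {Suc l..r}"
  then have "k \<in> {1..r}" by auto
  then show "0 \<le> \<alpha> k \<and> \<alpha> k \<le> 4" using alpha_le_2 alpha_pos by fastforce
qed simp_all

lemma step_error_le:
  assumes l: "l \<in> {1..r}"
  shows "\<epsilon>' l * cvnorm (ideal (l - 1)) \<le> 2 * \<epsilon> * alpha_upto r * sqrt (p \<beta>) * 4 ^ (l - 1) / 4 ^ r"
proof -
  have l1: "l - 1 \<le> r" "Suc (l - 1) = l" using l by auto
  then have split: "alpha_upto r = alpha_upto (l - 1) * (\<Prod>k=l..r. \<alpha> k)"
    using alpha_upto_split by metis
  have "r = (r - l + 1) + (l - 1)" using l by auto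
  then have pow: "(4::real) ^ r = 4 ^ (r - l + 1) * 4 ^ (l - 1)" by (metis power_add)
  have "\<epsilon>' l * cvnorm (ideal (l - 1)) = alpha_upto (l - 1) * (\<epsilon>' l * sqrt (p (beta_upto (l - 1))))"
    using ideal_cvnorm[OF l1(1)] by simp
  also have "\<dots> \<le> alpha_upto (l - 1) * (2 * \<epsilon> * (\<Prod>k=l..r. \<alpha> k) / 4 ^ (r - l + 1) * sqrt (p \<beta>))"
    using eps'_bound[OF l] alpha_upto_pos[OF l1(1)] by (intro mult_left_mono) auto
  also have "\<dots> = 2 * \<epsilon> * alpha_upto r * sqrt (p \<beta>) * 4 ^ (l - 1) / 4 ^ r"
    unfolding split pow by simp
  finally show ?thesis .
qed

text \<open>The per-step errors grow geometrically with ratio \<open>4\<close>, so their sum is at most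
  \<open>4/3\<close> times the last one.\<close>

lemma error_le:
  "l \<le> r \<Longrightarrow> cvnorm (actual l - ideal l) \<le> 2 / 3 * \<epsilon> * alpha_upto r * sqrt (p \<beta>) * 4 ^ l / 4 ^ r"
proof (induction l)
  case 0
  have "actual 0 - ideal 0 = 0\<^sub>v d" using \<Psi>(1) by (intro eq_vecI) (auto simp: ideal_0)
  moreover have "0 \<le> 2 / 3 * \<epsilon> * alpha_upto r * sqrt (p \<beta>) * 4 ^ 0 / 4 ^ r"
    using \<epsilon> alpha_upto_pos[of r] p_pos[of \<beta>] by (intro divide_nonneg_pos mult_nonneg_nonneg) auto
  ultimately show ?case by simp
next
  case (Suc l)
  have "cvnorm (actual (Suc l) - ideal (Suc l)) \<le> cvnorm (actual l - ideal l) + \<epsilon>' (Suc l) * cvnorm (ideal l)"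
    by (rule error_Suc[OF Suc.prems])
  also have "\<dots> \<le> 2 / 3 * \<epsilon> * alpha_upto r * sqrt (p \<beta>) * 4 ^ l / 4 ^ r
      + 2 * \<epsilon> * alpha_upto r * sqrt (p \<beta>) * 4 ^ l / 4 ^ r"
    using Suc step_error_le[of "Suc l"] by (intro add_mono) auto
  also have "\<dots> = 2 / 3 * \<epsilon> * alpha_upto r * sqrt (p \<beta>) * 4 ^ Suc l / 4 ^ r"
    by (simp add: field_simps)
  finally show ?case .
qed

lemma relative_error_le:
  assumes l: "l \<le> r"
  shows "cvnorm (actual l - ideal l) \<le> 2 / 3 * \<epsilon> * cvnorm (ideal l)"
proof -
  have "alpha_upto r * sqrt (p \<beta>) \<le> (alpha_upto l * 4 ^ (r - l)) * sqrt (p (beta_upto l))"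
    unfolding alpha_upto_split[OF l]
    using alpha_tail_le[of l] alpha_upto_pos[OF l] p_beta_le[OF l] alpha_prod_nonneg[of "Suc l"]
      less_imp_le[OF p_pos]
    by (intro mult_mono) auto
  then have "2 / 3 * \<epsilon> * 4 ^ l / 4 ^ r * (alpha_upto r * sqrt (p \<beta>))
      \<le> 2 / 3 * \<epsilon> * 4 ^ l / 4 ^ r * (alpha_upto l * 4 ^ (r - l) * sqrt (p (beta_upto l)))"
    using \<epsilon> by (intro mult_left_mono) auto
  also have "\<dots> = 2 / 3 * \<epsilon> * cvnorm (ideal l) * (4 ^ (r - l) * 4 ^ l / 4 ^ r)"
    unfolding ideal_cvnorm[OF l] by (simp add: field_simps)
  also have "(4::real) ^ (r - l) * 4 ^ l / 4 ^ r = 1" using l by (simp flip: power_add)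
  finally have "2 / 3 * \<epsilon> * 4 ^ l / 4 ^ r * (alpha_upto r * sqrt (p \<beta>)) \<le> 2 / 3 * \<epsilon> * cvnorm (ideal l)"
    by simp
  moreover have "2 / 3 * \<epsilon> * alpha_upto r * sqrt (p \<beta>) * 4 ^ l / 4 ^ r
      = 2 / 3 * \<epsilon> * 4 ^ l / 4 ^ r * (alpha_upto r * sqrt (p \<beta>))" by simp
  ultimately show ?thesis using error_le[OF l] by linarith
qed

lemma actual_cvnorm_close:
  "l \<le> r \<Longrightarrow> \<bar>cvnorm (actual l) - cvnorm (ideal l)\<bar> \<le> 2 / 3 * \<epsilon> * cvnorm (ideal l)"
  using cvnorm_diff_abs_le[of "actual l" "ideal l"] relative_error_le actual_carrier ideal_carrier
  by (metis carrier_vecD order_trans)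

lemma actual_cvnorm_pos:
  assumes l: "l \<le> r"
  shows "0 < cvnorm (actual l)"
proof -
  have "\<epsilon> * cvnorm (ideal l) \<le> 1 / 100 * cvnorm (ideal l)"
    using \<epsilon> by (intro mult_right_mono) auto
  then show ?thesis using actual_cvnorm_close[OF l] ideal_cvnorm_pos[OF l] unfolding abs_le_iff by linarith
qed

lemma actual_cvnorm_le_1: "l \<le> r \<Longrightarrow> cvnorm (actual l) \<le> 1"
proof (induction l)
  case (Suc l)
  then show ?case using M_contraction[of "Suc l" "actual l"] actual_carrier by simp
qed (simp add: \<Psi>)

definition n_runs :: "nat \<Rightarrow> real" where
  "n_runs l = p (\<Sum>k=1..l-1. \<Delta>\<beta> k) / (p \<beta> * (\<Prod>k=l..r. (\<alpha> k)\<^sup>2))"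

lemma n_runs_eq:
  assumes l: "l \<in> {1..r}"
  shows "n_runs l = (cvnorm (ideal (l - 1)))\<^sup>2 / (cvnorm (ideal r))\<^sup>2"
proof -
  have l1: "l - 1 \<le> r" "Suc (l - 1) = l" using l by auto
  then have split: "alpha_upto r = alpha_upto (l - 1) * (\<Prod>k=l..r. \<alpha> k)"
    using alpha_upto_split by metis
  have "beta_upto r = \<beta>" unfolding beta_upto_def \<beta>_sum ..
  then have "(cvnorm (ideal (l - 1)))\<^sup>2 / (cvnorm (ideal r))\<^sup>2
      = (alpha_upto (l - 1))\<^sup>2 * p (beta_upto (l - 1)) / ((alpha_upto r)\<^sup>2 * p \<beta>)"
    unfolding ideal_cvnorm[OF l1(1)] ideal_cvnorm[OF order.refl] using less_imp_le[OF p_pos]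
    by (simp add: power_mult_distrib)
  also have "\<dots> = n_runs l"
    unfolding split n_runs_def beta_upto_def using alpha_upto_pos[OF l1(1)] p_pos[of \<beta>]
    by (simp add: power_mult_distrib prod_power_distrib)
  finally show ?thesis ..
qed

lemma halt_prob_eq_1: "frag_halt_prob M \<Psi> r = 1"
  using frag_halt_prob_eq_1[OF \<Psi>(2) actual_cvnorm_pos actual_cvnorm_le_1] by simp

lemma trace_dist_le: "trace_dist_pure (frag_state M \<Psi> r) (normalize_vec (F_op \<beta> H *\<^sub>v \<Psi>)) \<le> 10 * \<epsilon>"
proof -
  have "normalize_vec (F_op \<beta> H *\<^sub>v \<Psi>) = normalize_vec (ideal r)"
    unfolding ideal_def beta_upto_def \<beta>_sum using normalize_vec_smult[OF alpha_upto_pos] by simp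
  moreover have "trace_dist_pure (normalize_vec (actual r)) (normalize_vec (ideal r))
      \<le> cvnorm (normalize_vec (actual r) - normalize_vec (ideal r))"
    using carrier_vecD[OF actual_carrier] carrier_vecD[OF ideal_carrier] actual_cvnorm_pos ideal_cvnorm_pos
    by (intro trace_dist_pure_le_cvnorm_diff) (auto simp: normalize_vec_cvnorm)
  moreover have "\<dots> \<le> 2 * cvnorm (actual r - ideal r) / cvnorm (ideal r)"
    using carrier_vecD[OF actual_carrier] carrier_vecD[OF ideal_carrier] ideal_cvnorm_pos
    by (intro normalize_vec_diff) auto
  moreover have "\<dots> \<le> 2 * (2 / 3 * \<epsilon> * cvnorm (ideal r)) / cvnorm (ideal r)"
    using relative_error_le[of r] ideal_cvnorm_pos[of r] by (intro divide_right_mono) auto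
  ultimately show ?thesis using ideal_cvnorm_pos[of r] \<epsilon> frag_state_eq_normalize[OF \<Psi>(2)] by simp
qed

lemma expected_runs_error:
  assumes l: "l \<in> {1..r}"
  shows "\<bar>frag_expected_runs M \<Psi> r l - n_runs l\<bar> \<le> 10 * \<epsilon> * n_runs l"
proof -
  have l1: "l - 1 \<le> r" using l by auto
  have "\<bar>frag_expected_runs M \<Psi> r l - n_runs l\<bar> \<le> 5 * (2 / 3 * \<epsilon>) * n_runs l"
    unfolding frag_expected_runs_eq[OF \<Psi>(2) actual_cvnorm_pos actual_cvnorm_le_1, OF order.refl order.refl]
      n_runs_eq[OF l]
    using actual_cvnorm_close[OF l1] actual_cvnorm_close[of r] ideal_cvnorm_pos[OF l1] ideal_cvnorm_pos[of r] \<epsilon>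
    by (intro ratio_power2_rel_error) auto
  also have "\<dots> \<le> 10 * \<epsilon> * n_runs l"
    using \<epsilon> n_runs_eq[OF l] by (intro mult_right_mono) auto
  finally show ?thesis .
qed

lemma expected_cost_error:
  "\<bar>(\<Sum>l=1..r. frag_expected_runs M \<Psi> r l * real (q l)) - (\<Sum>l=1..r. n_runs l * real (q l))\<bar>
     \<le> 10 * \<epsilon> * (\<Sum>l=1..r. n_runs l * real (q l))"
proof -
  have "\<bar>(\<Sum>l=1..r. frag_expected_runs M \<Psi> r l * real (q l)) - (\<Sum>l=1..r. n_runs l * real (q l))\<bar>
      = \<bar>\<Sum>l=1..r. (frag_expected_runs M \<Psi> r l - n_runs l) * real (q l)\<bar>"
    by (simp add: sum_subtractf left_diff_distrib)
  also have "\<dots> \<le> (\<Sum>l=1..r. \<bar>(frag_expected_runs M \<Psi> r l - n_runs l) * real (q l)\<bar>)"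
    by (rule sum_abs)
  also have "\<dots> = (\<Sum>l=1..r. \<bar>frag_expected_runs M \<Psi> r l - n_runs l\<bar> * real (q l))"
    by (simp add: abs_mult)
  also have "\<dots> \<le> (\<Sum>l=1..r. 10 * \<epsilon> * n_runs l * real (q l))"
    using expected_runs_error by (intro sum_mono mult_right_mono) auto
  finally show ?thesis by (simp add: sum_distrib_left mult.assoc)
qed

theorem guarantees:
  "let M = (\<lambda>l. anc0_block d (m l) (U l));
       n = (\<lambda>l. p_psi H \<Psi> (\<Sum>k=1..l-1. \<Delta>\<beta> k) / (p_psi H \<Psi> \<beta> * (\<Prod>k=l..r. (\<alpha> k)\<^sup>2)));
       target = normalize_vec (F_op \<beta> H *\<^sub>v \<Psi>)
   in frag_halt_prob M \<Psi> r = 1 \<and>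
      trace_dist_pure (frag_state M \<Psi> r) target \<le> 10 * \<epsilon> \<and>
      (\<forall>l\<in>{1..r}. \<bar>frag_expected_runs M \<Psi> r l - n l\<bar> \<le> 10 * \<epsilon> * n l) \<and>
      \<bar>(\<Sum>l=1..r. frag_expected_runs M \<Psi> r l * real (q l)) - (\<Sum>l=1..r. n l * real (q l))\<bar>
        \<le> 10 * \<epsilon> * (\<Sum>l=1..r. n l * real (q l))"
  unfolding Let_def M_def[symmetric] n_runs_def[symmetric]
  using halt_prob_eq_1 trace_dist_le expected_runs_error expected_cost_error by blast

end

theorem theorem4:
  "\<exists>C::real. C > 0 \<and> (\<exists>\<epsilon>0::real. \<epsilon>0 > 0 \<and>
   (\<forall>(d::nat) (H::complex mat) (\<Psi>::complex vec) (\<beta>::real) (\<epsilon>::real) (r::nat)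
      (\<Delta>\<beta>::nat \<Rightarrow> real) (\<alpha>::nat \<Rightarrow> real) (\<epsilon>'::nat \<Rightarrow> real) (m::nat \<Rightarrow> nat)
      (U::nat \<Rightarrow> complex mat) (q::nat \<Rightarrow> nat).
     0 < d \<and> hermitian_mat d H \<and> op_norm H \<le> 1 \<and>
     \<Psi> \<in> carrier_vec d \<and> cvnorm \<Psi> = 1 \<and>
     0 \<le> \<beta> \<and> 0 \<le> \<epsilon> \<and> \<epsilon> \<le> \<epsilon>0 \<and>
     (\<forall>l\<in>{1..r}. 0 < \<Delta>\<beta> l) \<and> (\<Sum>l=1..r. \<Delta>\<beta> l) = \<beta> \<and>
     (\<forall>l\<in>{1..r}. 0 < \<alpha> l \<and> qite_primitive d H (\<Delta>\<beta> l) (\<epsilon>' l) (\<alpha> l) (m l) (U l)) \<and>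
     (1 \<le> r \<longrightarrow> \<epsilon>' 1 \<le> \<epsilon> * (\<Prod>k=1..r. \<alpha> k) / (2 * 4 ^ (r - 1)) * sqrt (p_psi H \<Psi> \<beta>)) \<and>
     (\<forall>l\<in>{2..r}. \<epsilon>' l \<le> \<epsilon> * (\<Prod>k=l..r. \<alpha> k) / 4 ^ (r - l + 1) *
          sqrt (p_psi H \<Psi> \<beta> / p_psi H \<Psi> (\<Sum>k=1..l-1. \<Delta>\<beta> k)))
     \<longrightarrow>
     (let M = (\<lambda>l. anc0_block d (m l) (U l));
          n = (\<lambda>l. p_psi H \<Psi> (\<Sum>k=1..l-1. \<Delta>\<beta> k) /
                     (p_psi H \<Psi> \<beta> * (\<Prod>k=l..r. (\<alpha> k)\<^sup>2)));
          target = normalize_vec (F_op \<beta> H *\<^sub>v \<Psi>)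
      in frag_halt_prob M \<Psi> r = 1 \<and>
         trace_dist_pure (frag_state M \<Psi> r) target \<le> C * \<epsilon> \<and>
         (\<forall>l\<in>{1..r}. \<bar>frag_expected_runs M \<Psi> r l - n l\<bar> \<le> C * \<epsilon> * n l) \<and>
         \<bar>(\<Sum>l=1..r. frag_expected_runs M \<Psi> r l * real (q l)) -
           (\<Sum>l=1..r. n l * real (q l))\<bar>
           \<le> C * \<epsilon> * (\<Sum>l=1..r. n l * real (q l)))))"
proof (rule exI[of _ 10], rule conjI, simp, rule exI[of _ "1/100"], rule conjI, simp,
    intro allI impI, goal_cases)
  case (1 d H \<Psi> \<beta> \<epsilon> r \<Delta>\<beta> \<alpha> \<epsilon>' m U q)
  then interpret fragmented_qite d H \<Psi> \<beta> \<epsilon> r \<Delta>\<beta> \<alpha> \<epsilon>' m U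
    by unfold_locales auto
  show ?case by (rule guarantees)
qed

end
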